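(* Let $(H,A,C)$ be a Doi-Hopf datum and $\gamma:C\to\mathrm{Hom}(C,A)$ an $A$-integral. The following are equivalent: (1) $\gamma$ is total, i.e. $\sum\gamma(c_{(1)})(c_{(2)})=\varepsilon(c)1_A$ for all $c\in C$; (2) for all $c\in C$, $a\in A$: $\sum c_{(3)}\cdot\gamma(c_{(1)})(c_{(2)})_{<-1>}\otimes a\,\gamma(c_{(1)})(c_{(2)})_{<0>}=c\otimes a$ in $C\otimes A$; (3) for every Doi-Hopf module $M\in{}^C\mathcal M(H)_A$ and every $m\in M$: $\sum m_{<0>}\,\gamma(m_{<-2>})(m_{<-1>})=m$.
   Context: Sweedler notation $\Delta(c)=\sum c_{(1)}\otimes c_{(2)}$, $\rho(m)=\sum m_{<-1>}\otimes m_{<0>}$ (iterated $m_{<-2>}\otimes m_{<-1>}\otimes m_{<0>}$). Doi-Hopf datum $(H,A,C)$: $H$ bialgebra over commutative ring $k$, $A$ left $H$-comodule algebra, $C$ right $H$-module coalgebra ($\Delta(c\cdot h)=\sum c_{(1)}\cdot h_{(1)}\otimes c_{(2)}\cdot h_{(2)}$, $\varepsilon(c\cdot h)=\varepsilon(c)\varepsilon(h)$), $C$ flat. ${}^C\mathcal M(H)_A$: right $A$-modules $M$ with left $C$-coaction such that $\rho_M(ma)=\sum m_{<-1>}\cdot a_{<-1>}\otimes m_{<0>}a_{<0>}$. An $A$-integral is a $k$-linear $\gamma:C\to\mathrm{Hom}(C,A)$ with, for all $a\in A$, $c,d\in C$: (i) $\sum a_{<0>}\gamma(c\cdot a_{<-2>})(d\cdot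 a_{<-1>})=\gamma(c)(d)\,a$; (ii) $\sum c_{(1)}\otimes\gamma(c_{(2)})(d)=\sum d_{(2)}\cdot\gamma(c)(d_{(1)})_{<-1>}\otimes\gamma(c)(d_{(1)})_{<0>}$. *)

theory Defs
  imports Complex_Main
begin

text \<open>Modules carried by a type with class ab_group_add use
HOL equality; tensor products are quotients of lists of pairs.\<close>

record ('v, 'k) kmod =
  m_eq   :: "'v \<Rightarrow> 'v \<Rightarrow> bool"
  m_add  :: "'v \<Rightarrow> 'v \<Rightarrow> 'v"
  m_zero :: "'v"
  m_neg  :: "'v \<Rightarrow> 'v"
  m_smul :: "'k \<Rightarrow> 'v \<Rightarrow> 'v"

definition setoid_kmod :: "('v, 'k::comm_ring_1) kmod \<Rightarrow> bool" where
  "setoid_kmod V \<longleftrightarrow>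
     reflp (m_eq V) \<and> symp (m_eq V) \<and> transp (m_eq V) \<and>
     (\<forall>x x' y y'. m_eq V x x' \<longrightarrow> m_eq V y y' \<longrightarrow> m_eq V (m_add V x y) (m_add V x' y')) \<and>
     (\<forall>x x'. m_eq V x x' \<longrightarrow> m_eq V (m_neg V x) (m_neg V x')) \<and>
     (\<forall>r x x'. m_eq V x x' \<longrightarrow> m_eq V (m_smul V r x) (m_smul V r x')) \<and>
     (\<forall>x y z. m_eq V (m_add V (m_add V x y) z) (m_add V x (m_add V y z))) \<and>
     (\<forall>x y. m_eq V (m_add V x y) (m_add V y x)) \<and>
     (\<forall>x. m_eq V (m_add V (m_zero V) x) x) \<and>
     (\<forall>x. m_eq V (m_add V (m_neg V x) x) (m_zero V)) \<and>
     (\<forall>r x y. m_eq V (m_smul V r (m_add V x y)) (m_add V (m_smul V r x) (m_smul V r y))) \<and>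
     (\<forall>r s x. m_eq V (m_smul V (r + s) x) (m_add V (m_smul V r x) (m_smul V s x))) \<and>
     (\<forall>r s x. m_eq V (m_smul V r (m_smul V s x)) (m_smul V (r * s) x)) \<and>
     (\<forall>x. m_eq V (m_smul V 1 x) x)"

definition msum :: "('v, 'k) kmod \<Rightarrow> 'v list \<Rightarrow> 'v" where
  "msum V xs = foldr (m_add V) xs (m_zero V)"

definition cmod :: "('k::comm_ring_1 \<Rightarrow> 'v::ab_group_add \<Rightarrow> 'v) \<Rightarrow> ('v, 'k) kmod" where
  "cmod sc = \<lparr>m_eq = (=), m_add = (+), m_zero = 0, m_neg = uminus, m_smul = sc\<rparr>"

text \<open>A list [(v1,w1),...,(vn,wn)] represents the element sum vi (x) wi of V (x)_k W.
teq V W xs ys holds iff xs and ys represent the same element of V (x)_k W: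
it is the least equivalence relation, compatible with concatenation (the sum),
containing commutativity of the sum and the defining relations of the tensor product
(bi-additivity, k-balancedness, compatibility with the equalities of V and W).\<close>

inductive teq :: "('v, 'k) kmod \<Rightarrow> ('w, 'k) kmod \<Rightarrow> ('v \<times> 'w) list \<Rightarrow> ('v \<times> 'w) list \<Rightarrow> bool"
  for V W where
  teq_refl:  "teq V W xs xs"
| teq_sym:   "teq V W xs ys \<Longrightarrow> teq V W ys xs"
| teq_trans: "teq V W xs ys \<Longrightarrow> teq V W ys zs \<Longrightarrow> teq V W xs zs"
| teq_app:   "teq V W xs xs' \<Longrightarrow> teq V W ys ys' \<Longrightarrow> teq V W (xs @ ys) (xs' @ ys')"
| teq_comm:  "teq V W (xs @ ys) (ys @ xs)"
| teq_eql:   "m_eq V v v' \<Longrightarrow> teq V W [(v, w)] [(v', w)]"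
| teq_eqr:   "m_eq W w w' \<Longrightarrow> teq V W [(v, w)] [(v, w')]"
| teq_addl:  "teq V W [(m_add V v v', w)] [(v, w), (v', w)]"
| teq_addr:  "teq V W [(v, m_add W w w')] [(v, w), (v, w')]"
| teq_zerol: "teq V W [(m_zero V, w)] []"
| teq_zeror: "teq V W [(v, m_zero W)] []"
| teq_bal:   "teq V W [(m_smul V r v, w)] [(v, m_smul W r w)]"

definition tensor :: "('v, 'k) kmod \<Rightarrow> ('w, 'k) kmod \<Rightarrow> (('v \<times> 'w) list, 'k) kmod" where
  "tensor V W = \<lparr>m_eq = teq V W, m_add = (@), m_zero = [],
                 m_neg = map (\<lambda>(v, w). (m_neg V v, w)),
                 m_smul = (\<lambda>r. map (\<lambda>(v, w). (m_smul V r v, w)))\<rparr>"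

text \<open>(Delta (x) id) applied to sum xi (x) yi, landing in X (x) (X (x) Y).\<close>
definition dl :: "('x \<Rightarrow> ('x \<times> 'x) list) \<Rightarrow> ('x \<times> 'y) list \<Rightarrow> ('x \<times> ('x \<times> 'y) list) list" where
  "dl \<Delta> xs = concat (map (\<lambda>(p, q). map (\<lambda>(p1, p2). (p1, [(p2, q)])) (\<Delta> p)) xs)"

text \<open>(id (x) rho) applied to sum xi (x) yi.\<close>
definition dr :: "('y \<Rightarrow> ('x \<times> 'z) list) \<Rightarrow> ('x \<times> 'y) list \<Rightarrow> ('x \<times> ('x \<times> 'z) list) list" where
  "dr \<rho> xs = map (\<lambda>(p, q). (p, \<rho> q)) xs"

text \<open>Flatness of a k-module, via the equational criterion (Lazard/Bourbaki):
every relation sum ai ci = 0 is a consequence of relations with coefficients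
killed by the ai.\<close>
definition flat_module :: "('k::comm_ring_1 \<Rightarrow> 'c::ab_group_add \<Rightarrow> 'c) \<Rightarrow> bool" where
  "flat_module sC \<longleftrightarrow>
     (\<forall>(n::nat) (a::nat \<Rightarrow> 'k) (c::nat \<Rightarrow> 'c). (\<Sum>i<n. sC (a i) (c i)) = 0 \<longrightarrow>
        (\<exists>(m::nat) (b::nat \<Rightarrow> nat \<Rightarrow> 'k) (d::nat \<Rightarrow> 'c).
           (\<forall>i<n. c i = (\<Sum>j<m. sC (b i j) (d j))) \<and>
           (\<forall>j<m. (\<Sum>i<n. a i * b i j) = 0)))"

definition kalgebra :: "('k::comm_ring_1 \<Rightarrow> 'h::ring_1 \<Rightarrow> 'h) \<Rightarrow> bool" where
  "kalgebra sH \<longleftrightarrow> module sH \<and>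
     (\<forall>r x y. sH r (x * y) = sH r x * y \<and> sH r (x * y) = x * sH r y)"

definition bialgebra ::
  "('k::comm_ring_1 \<Rightarrow> 'h::ring_1 \<Rightarrow> 'h) \<Rightarrow> ('h \<Rightarrow> ('h \<times> 'h) list) \<Rightarrow> ('h \<Rightarrow> 'k) \<Rightarrow> bool" where
  "bialgebra sH \<Delta>H \<epsilon>H \<longleftrightarrow>
     kalgebra sH \<and>
     (\<forall>x y. teq (cmod sH) (cmod sH) (\<Delta>H (x + y)) (\<Delta>H x @ \<Delta>H y)) \<and>
     (\<forall>r x. teq (cmod sH) (cmod sH) (\<Delta>H (sH r x)) (map (\<lambda>(p, q). (sH r p, q)) (\<Delta>H x))) \<and>
     (\<forall>x. teq (cmod sH) (tensor (cmod sH) (cmod sH)) (dl \<Delta>H (\<Delta>H x)) (dr \<Delta>H (\<Delta>H x))) \<and>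
     (\<forall>x y. \<epsilon>H (x + y) = \<epsilon>H x + \<epsilon>H y) \<and>
     (\<forall>r x. \<epsilon>H (sH r x) = r * \<epsilon>H x) \<and>
     (\<forall>x. sum_list (map (\<lambda>(p, q). sH (\<epsilon>H p) q) (\<Delta>H x)) = x) \<and>
     (\<forall>x. sum_list (map (\<lambda>(p, q). sH (\<epsilon>H q) p) (\<Delta>H x)) = x) \<and>
     (\<forall>x y. teq (cmod sH) (cmod sH) (\<Delta>H (x * y))
              (concat (map (\<lambda>(p, q). map (\<lambda>(p', q'). (p * p', q * q')) (\<Delta>H y)) (\<Delta>H x)))) \<and>
     teq (cmod sH) (cmod sH) (\<Delta>H 1) [(1, 1)] \<and>
     (\<forall>x y. \<epsilon>H (x * y) = \<epsilon>H x * \<epsilon>H y) \<and>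
     \<epsilon>H 1 = 1"

text \<open>Left H-comodule algebra A with coaction rho(a) = sum a<-1> (x) a<0>.\<close>
definition comodule_algebra ::
  "('k::comm_ring_1 \<Rightarrow> 'h::ring_1 \<Rightarrow> 'h) \<Rightarrow> ('h \<Rightarrow> ('h \<times> 'h) list) \<Rightarrow> ('h \<Rightarrow> 'k) \<Rightarrow>
   ('k \<Rightarrow> 'a::ring_1 \<Rightarrow> 'a) \<Rightarrow> ('a \<Rightarrow> ('h \<times> 'a) list) \<Rightarrow> bool" where
  "comodule_algebra sH \<Delta>H \<epsilon>H sA \<rho>A \<longleftrightarrow>
     kalgebra sA \<and>
     (\<forall>a b. teq (cmod sH) (cmod sA) (\<rho>A (a + b)) (\<rho>A a @ \<rho>A b)) \<and>
     (\<forall>r a. teq (cmod sH) (cmod sA) (\<rho>A (sA r a)) (map (\<lambda>(h, x). (sH r h, x)) (\<rho>A a))) \<and>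
     (\<forall>a. teq (cmod sH) (tensor (cmod sH) (cmod sA)) (dl \<Delta>H (\<rho>A a)) (dr \<rho>A (\<rho>A a))) \<and>
     (\<forall>a. sum_list (map (\<lambda>(h, x). sA (\<epsilon>H h) x) (\<rho>A a)) = a) \<and>
     (\<forall>a b. teq (cmod sH) (cmod sA) (\<rho>A (a * b))
              (concat (map (\<lambda>(h, x). map (\<lambda>(h', y). (h * h', x * y)) (\<rho>A b)) (\<rho>A a)))) \<and>
     teq (cmod sH) (cmod sA) (\<rho>A 1) [(1, 1)]"

text \<open>Right H-module coalgebra C, action actC c h = c . h.\<close>
definition module_coalgebra ::
  "('k::comm_ring_1 \<Rightarrow> 'h::ring_1 \<Rightarrow> 'h) \<Rightarrow> ('h \<Rightarrow> ('h \<times> 'h) list) \<Rightarrow> ('h \<Rightarrow> 'k) \<Rightarrow>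
   ('k \<Rightarrow> 'c::ab_group_add \<Rightarrow> 'c) \<Rightarrow> ('c \<Rightarrow> ('c \<times> 'c) list) \<Rightarrow> ('c \<Rightarrow> 'k) \<Rightarrow>
   ('c \<Rightarrow> 'h \<Rightarrow> 'c) \<Rightarrow> bool" where
  "module_coalgebra sH \<Delta>H \<epsilon>H sC \<Delta>C \<epsilon>C actC \<longleftrightarrow>
     module sC \<and>
     (\<forall>x y. teq (cmod sC) (cmod sC) (\<Delta>C (x + y)) (\<Delta>C x @ \<Delta>C y)) \<and>
     (\<forall>r x. teq (cmod sC) (cmod sC) (\<Delta>C (sC r x)) (map (\<lambda>(p, q). (sC r p, q)) (\<Delta>C x))) \<and>
     (\<forall>x. teq (cmod sC) (tensor (cmod sC) (cmod sC)) (dl \<Delta>C (\<Delta>C x)) (dr \<Delta>C (\<Delta>C x))) \<and>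
     (\<forall>x y. \<epsilon>C (x + y) = \<epsilon>C x + \<epsilon>C y) \<and>
     (\<forall>r x. \<epsilon>C (sC r x) = r * \<epsilon>C x) \<and>
     (\<forall>x. sum_list (map (\<lambda>(p, q). sC (\<epsilon>C p) q) (\<Delta>C x)) = x) \<and>
     (\<forall>x. sum_list (map (\<lambda>(p, q). sC (\<epsilon>C q) p) (\<Delta>C x)) = x) \<and>
     (\<forall>c d h. actC (c + d) h = actC c h + actC d h) \<and>
     (\<forall>c h g. actC c (h + g) = actC c h + actC c g) \<and>
     (\<forall>r c h. actC (sC r c) h = sC r (actC c h) \<and> actC c (sH r h) = sC r (actC c h)) \<and>
     (\<forall>c. actC c 1 = c) \<and>
     (\<forall>c h g. actC (actC c h) g = actC c (h * g)) \<and>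
     (\<forall>c h. teq (cmod sC) (cmod sC) (\<Delta>C (actC c h))
              (concat (map (\<lambda>(c1, c2). map (\<lambda>(h1, h2). (actC c1 h1, actC c2 h2)) (\<Delta>H h)) (\<Delta>C c)))) \<and>
     (\<forall>c h. \<epsilon>C (actC c h) = \<epsilon>C c * \<epsilon>H h)"

definition doi_hopf_datum ::
  "('k::comm_ring_1 \<Rightarrow> 'h::ring_1 \<Rightarrow> 'h) \<Rightarrow> ('h \<Rightarrow> ('h \<times> 'h) list) \<Rightarrow> ('h \<Rightarrow> 'k) \<Rightarrow>
   ('k \<Rightarrow> 'a::ring_1 \<Rightarrow> 'a) \<Rightarrow> ('a \<Rightarrow> ('h \<times> 'a) list) \<Rightarrow>
   ('k \<Rightarrow> 'c::ab_group_add \<Rightarrow> 'c) \<Rightarrow> ('c \<Rightarrow> ('c \<times> 'c) list) \<Rightarrow> ('c \<Rightarrow> 'k) \<Rightarrow>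
   ('c \<Rightarrow> 'h \<Rightarrow> 'c) \<Rightarrow> bool" where
  "doi_hopf_datum sH \<Delta>H \<epsilon>H sA \<rho>A sC \<Delta>C \<epsilon>C actC \<longleftrightarrow>
     bialgebra sH \<Delta>H \<epsilon>H \<and> comodule_algebra sH \<Delta>H \<epsilon>H sA \<rho>A \<and>
     module_coalgebra sH \<Delta>H \<epsilon>H sC \<Delta>C \<epsilon>C actC \<and> flat_module sC"

text \<open>gamma c d stands for gamma(c)(d); gamma is k-linear C -> Hom_k(C,A).\<close>
definition A_integral ::
  "('k::comm_ring_1 \<Rightarrow> 'h::ring_1 \<Rightarrow> 'h) \<Rightarrow> ('h \<Rightarrow> ('h \<times> 'h) list) \<Rightarrow>
   ('k \<Rightarrow> 'a::ring_1 \<Rightarrow> 'a) \<Rightarrow> ('a \<Rightarrow> ('h \<times> 'a) list) \<Rightarrow>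
   ('k \<Rightarrow> 'c::ab_group_add \<Rightarrow> 'c) \<Rightarrow> ('c \<Rightarrow> ('c \<times> 'c) list) \<Rightarrow>
   ('c \<Rightarrow> 'h \<Rightarrow> 'c) \<Rightarrow> ('c \<Rightarrow> 'c \<Rightarrow> 'a) \<Rightarrow> bool" where
  "A_integral sH \<Delta>H sA \<rho>A sC \<Delta>C actC \<gamma> \<longleftrightarrow>
     (\<forall>c c' d. \<gamma> (c + c') d = \<gamma> c d + \<gamma> c' d) \<and>
     (\<forall>r c d. \<gamma> (sC r c) d = sA r (\<gamma> c d)) \<and>
     (\<forall>c d d'. \<gamma> c (d + d') = \<gamma> c d + \<gamma> c d') \<and>
     (\<forall>r c d. \<gamma> c (sC r d) = sA r (\<gamma> c d)) \<and>
     (\<forall>a c d. sum_list (concat (map (\<lambda>(h, x). map (\<lambda>(h1, h2). x * \<gamma> (actC c h1) (actC d h2)) (\<Delta>H h))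
                                 (\<rho>A a))) = \<gamma> c d * a) \<and>
     (\<forall>c d. teq (cmod sC) (cmod sA)
              (map (\<lambda>(c1, c2). (c1, \<gamma> c2 d)) (\<Delta>C c))
              (concat (map (\<lambda>(d1, d2). map (\<lambda>(h, x). (actC d2 h, x)) (\<rho>A (\<gamma> c d1))) (\<Delta>C d))))"

definition total_integral :: "('k::comm_ring_1 \<Rightarrow> 'a::ring_1 \<Rightarrow> 'a) \<Rightarrow>
   ('c \<Rightarrow> ('c \<times> 'c) list) \<Rightarrow> ('c \<Rightarrow> 'k) \<Rightarrow> ('c \<Rightarrow> 'c \<Rightarrow> 'a) \<Rightarrow> bool" where
  "total_integral sA \<Delta>C \<epsilon>C \<gamma> \<longleftrightarrow>
     (\<forall>c. sum_list (map (\<lambda>(c1, c2). \<gamma> c1 c2) (\<Delta>C c)) = sA (\<epsilon>C c) 1)"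

text \<open>M in C-M(H)_A: a k-module M (setoid presentation) with right A-action actM and
left C-coaction rhoM(m) = sum m<-1> (x) m<0>.\<close>
definition doi_hopf_module ::
  "('k::comm_ring_1 \<Rightarrow> 'h::ring_1 \<Rightarrow> 'h) \<Rightarrow>
   ('k \<Rightarrow> 'a::ring_1 \<Rightarrow> 'a) \<Rightarrow> ('a \<Rightarrow> ('h \<times> 'a) list) \<Rightarrow>
   ('k \<Rightarrow> 'c::ab_group_add \<Rightarrow> 'c) \<Rightarrow> ('c \<Rightarrow> ('c \<times> 'c) list) \<Rightarrow> ('c \<Rightarrow> 'k) \<Rightarrow>
   ('c \<Rightarrow> 'h \<Rightarrow> 'c) \<Rightarrow>
   ('m, 'k) kmod \<Rightarrow> ('m \<Rightarrow> 'a \<Rightarrow> 'm) \<Rightarrow> ('m \<Rightarrow> ('c \<times> 'm) list) \<Rightarrow> bool" where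
  "doi_hopf_module sH sA \<rho>A sC \<Delta>C \<epsilon>C actC M actM \<rho>M \<longleftrightarrow>
     setoid_kmod M \<and>
     (\<forall>m m' a. m_eq M m m' \<longrightarrow> m_eq M (actM m a) (actM m' a)) \<and>
     (\<forall>m m' a. m_eq M (actM (m_add M m m') a) (m_add M (actM m a) (actM m' a))) \<and>
     (\<forall>m a b. m_eq M (actM m (a + b)) (m_add M (actM m a) (actM m b))) \<and>
     (\<forall>r m a. m_eq M (actM (m_smul M r m) a) (m_smul M r (actM m a)) \<and>
              m_eq M (actM m (sA r a)) (m_smul M r (actM m a))) \<and>
     (\<forall>m. m_eq M (actM m 1) m) \<and>
     (\<forall>m a b. m_eq M (actM (actM m a) b) (actM m (a * b))) \<and>
     (\<forall>m m'. m_eq M m m' \<longrightarrow> teq (cmod sC) M (\<rho>M m) (\<rho>M m')) \<and>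
     (\<forall>m m'. teq (cmod sC) M (\<rho>M (m_add M m m')) (\<rho>M m @ \<rho>M m')) \<and>
     (\<forall>r m. teq (cmod sC) M (\<rho>M (m_smul M r m)) (map (\<lambda>(c, x). (sC r c, x)) (\<rho>M m))) \<and>
     (\<forall>m. teq (cmod sC) (tensor (cmod sC) M) (dl \<Delta>C (\<rho>M m)) (dr \<rho>M (\<rho>M m))) \<and>
     (\<forall>m. m_eq M (msum M (map (\<lambda>(c, x). m_smul M (\<epsilon>C c) x) (\<rho>M m))) m) \<and>
     (\<forall>m a. teq (cmod sC) M (\<rho>M (actM m a))
              (concat (map (\<lambda>(c, x). map (\<lambda>(h, b). (actC c h, actM x b)) (\<rho>A a)) (\<rho>M m))))"

text \<open>Condition (3) for a given module: sum m<0> gamma(m<-2>)(m<-1>) = m,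
with m<-2> (x) m<-1> (x) m<0> = (id (x) rho) rho(m).\<close>
definition integral_normalizes ::
  "('m, 'k) kmod \<Rightarrow> ('m \<Rightarrow> 'a \<Rightarrow> 'm) \<Rightarrow> ('m \<Rightarrow> ('c \<times> 'm) list) \<Rightarrow> ('c \<Rightarrow> 'c \<Rightarrow> 'a) \<Rightarrow> bool" where
  "integral_normalizes M actM \<rho>M \<gamma> \<longleftrightarrow>
     (\<forall>m. m_eq M (msum M (concat (map (\<lambda>(c, y). map (\<lambda>(d, x). actM x (\<gamma> c d)) (\<rho>M y)) (\<rho>M m)))) m)"

end

theory Submission
  imports Defs "HOL-Library.Multiset"
begin

text \<open>
  By coassociativity of \<open>\<Delta>C\<close>, the left-hand side of (2) equals
  \<open>\<Sum> c(2)(2) \<cdot> \<gamma>(c(1))(c(2)(1))<-1> \<otimes> a \<gamma>(c(1))(c(2)(1))<0>\<close>. Condition (ii) on \<open>\<gamma>\<close>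
  turns this into \<open>\<Sum> c(1)(1) \<otimes> a \<gamma>(c(1)(2))(c(2))\<close>, and coassociativity once more into
  \<open>\<Sum> c(1) \<otimes> a \<gamma>(c(2)(1))(c(2)(2))\<close>, which for a total integral is
  \<open>\<Sum> c(1) \<otimes> \<epsilon>(c(2)) a = c \<otimes> a\<close>. Conversely, \<open>\<epsilon> \<otimes> id\<close> maps the first of these expressions,
  for \<open>a = 1\<close>, to \<open>\<Sum> \<gamma>(c(1))(c(2))\<close>, so (2) forces totality.

  In a Doi-Hopf module, coassociativity of the coaction rewrites \<open>\<Sum> m<0> \<gamma>(m<-2>)(m<-1>)\<close> as
  \<open>\<Sum> m<0> \<gamma>(m<-1>(1))(m<-1>(2))\<close>, which for a total integral is \<open>\<Sum> \<epsilon>(m<-1>) m<0> = m\<close>.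
  Conversely, \<open>C \<otimes> A\<close> with coaction \<open>\<Delta>C \<otimes> id\<close> and action \<open>(c \<otimes> x) \<cdot> b = \<Sum> c \<cdot> b<-1> \<otimes> x b<0>\<close>
  is a Doi-Hopf module, and (3) for its element \<open>c \<otimes> 1\<close> is the coassociated form of (2) with
  \<open>a = 1\<close>, which again forces totality.
\<close>

section \<open>Tensor products as lists of pairs\<close>

lemma cmod_simps [simp]:
  "m_eq (cmod s) = (=)" "m_add (cmod s) = (+)" "m_zero (cmod s) = 0"
  "m_neg (cmod s) = uminus" "m_smul (cmod s) = s"
  by (simp_all add: cmod_def)

lemma tensor_simps [simp]:
  "m_eq (tensor V W) = teq V W" "m_add (tensor V W) = (@)" "m_zero (tensor V W) = []"
  "m_neg (tensor V W) = map (\<lambda>(v, w). (m_neg V v, w))"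
  "m_smul (tensor V W) = (\<lambda>r. map (\<lambda>(v, w). (m_smul V r v, w)))"
  by (simp_all add: tensor_def)

lemma msum_tensor: "msum (tensor V W) xs = concat xs"
  by (induction xs) (auto simp: msum_def)

lemma map_map_prod:
  "map (\<lambda>(p, q). f p q) (map (\<lambda>(p, q). (g p q, h p q)) L) = map (\<lambda>(p, q). f (g p q) (h p q)) L"
  by (induction L) auto

lemma concat_map_singleton_prod: "concat (map (\<lambda>(p, q). [f p q]) L) = map (\<lambda>(p, q). f p q) L"
  by (induction L) auto

lemma concat_map_concat_map:
  "concat (map F (concat (map (\<lambda>(p, q). G p q) L))) = concat (map (\<lambda>(p, q). concat (map F (G p q))) L)"
  by (induction L) auto

lemma concat_concat_map:
  "concat (concat (map (\<lambda>(p, q). G p q) L)) = concat (map (\<lambda>(p, q). concat (G p q)) L)"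
  by (induction L) auto

lemma concat_map_dl:
  "concat (map (\<lambda>(x, L). F x L) (dl \<Delta> xs)) =
   concat (map (\<lambda>(p, q). concat (map (\<lambda>(p1, p2). F p1 [(p2, q)]) (\<Delta> p))) xs)"
  by (induction xs) (auto simp: dl_def map_map_prod simp del: map_map)

lemma map_dl:
  "map (\<lambda>(x, L). F x L) (dl \<Delta> xs) =
   concat (map (\<lambda>(p, q). map (\<lambda>(p1, p2). F p1 [(p2, q)]) (\<Delta> p)) xs)"
  by (induction xs) (auto simp: dl_def map_map_prod simp del: map_map)

lemma concat_map_dr:
  "concat (map (\<lambda>(x, L). F x L) (dr \<rho> xs)) = concat (map (\<lambda>(p, q). F p (\<rho> q)) xs)"
  by (induction xs) (auto simp: dr_def)

lemma dl_append: "dl \<Delta> (xs @ ys) = dl \<Delta> xs @ dl \<Delta> ys"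
  by (simp add: dl_def)

lemma dl_concat_map: "dl \<Delta> (concat (map (\<lambda>(p, q). G p q) L)) = concat (map (\<lambda>(p, q). dl \<Delta> (G p q)) L)"
  by (induction L) (auto simp: dl_def)

declare teq_trans [trans]

lemma teq_cmod_addl: "teq (cmod s) W [(v + v', w)] [(v, w), (v', w)]"
  using teq_addl[of "cmod s" W v v' w] by simp

lemma teq_cmod_addr: "teq V (cmod s) [(v, w + w')] [(v, w), (v, w')]"
  using teq_addr[of V "cmod s" v w w'] by simp

lemma teq_cmod_zerol: "teq (cmod s) W [(0, w)] []"
  using teq_zerol[of "cmod s" W w] by simp

lemma teq_cmod_zeror: "teq V (cmod s) [(v, 0)] []"
  using teq_zeror[of V "cmod s" v] by simp

lemma teq_cmod_bal: "teq (cmod s) W [(s r v, w)] [(v, m_smul W r w)]"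
  using teq_bal[of "cmod s" W r v w] by simp

lemma teq_cmod_bal_cmod: "teq (cmod s) (cmod t) [(s r v, w)] [(v, t r w)]"
  using teq_bal[of "cmod s" "cmod t" r v w] by simp

lemma teq_tensor_addr: "teq V (tensor X Y) [(v, w @ w')] [(v, w), (v, w')]"
  using teq_addr[of V "tensor X Y" v w w'] by simp

lemma teq_tensor_zeror: "teq V (tensor X Y) [(v, [])] []"
  using teq_zeror[of V "tensor X Y" v] by simp

lemma teq_nested_addl: "teq V (tensor (cmod s) X) [(v, [(w + w', x)])] [(v, [(w, x)]), (v, [(w', x)])]"
proof -
  have "teq V (tensor (cmod s) X) [(v, [(w + w', x)])] [(v, [(w, x)] @ [(w', x)])]"
    using teq_eqr[of "tensor (cmod s) X" "[(w + w', x)]" "[(w, x)] @ [(w', x)]" V v]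
    by (simp add: teq_cmod_addl)
  also have "teq V (tensor (cmod s) X) \<dots> [(v, [(w, x)]), (v, [(w', x)])]"
    by (rule teq_tensor_addr)
  finally show ?thesis .
qed

lemma teq_nested_addr: "teq V (tensor W (cmod t)) [(v, [(w, x + x')])] [(v, [(w, x)]), (v, [(w, x')])]"
proof -
  have "teq V (tensor W (cmod t)) [(v, [(w, x + x')])] [(v, [(w, x)] @ [(w, x')])]"
    using teq_eqr[of "tensor W (cmod t)" "[(w, x + x')]" "[(w, x)] @ [(w, x')]" V v]
    by (simp add: teq_cmod_addr)
  also have "teq V (tensor W (cmod t)) \<dots> [(v, [(w, x)]), (v, [(w, x')])]"
    by (rule teq_tensor_addr)
  finally show ?thesis .
qed

lemma teq_nested_zerol: "teq V (tensor (cmod s) X) [(v, [(0, x)])] []"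
proof -
  have "teq V (tensor (cmod s) X) [(v, [(0, x)])] [(v, [])]"
    using teq_eqr[of "tensor (cmod s) X" "[(0, x)]" "[]" V v] by (simp add: teq_cmod_zerol)
  also have "teq V (tensor (cmod s) X) \<dots> []"
    by (rule teq_tensor_zeror)
  finally show ?thesis .
qed

lemma teq_nested_zeror: "teq V (tensor W (cmod t)) [(v, [(w, 0)])] []"
proof -
  have "teq V (tensor W (cmod t)) [(v, [(w, 0)])] [(v, [])]"
    using teq_eqr[of "tensor W (cmod t)" "[(w, 0)]" "[]" V v] by (simp add: teq_cmod_zeror)
  also have "teq V (tensor W (cmod t)) \<dots> []"
    by (rule teq_tensor_zeror)
  finally show ?thesis .
qed

lemma teq_nested_bal_outer: "teq (cmod s) (tensor (cmod s) X) [(s r v, [(w, x)])] [(v, [(s r w, x)])]"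
  using teq_cmod_bal[of s "tensor (cmod s) X" r v "[(w, x)]"] by simp

lemma teq_nested_bal_inner: "teq V (tensor (cmod s) (cmod t)) [(v, [(s r w, x)])] [(v, [(w, t r x)])]"
  using teq_eqr[of "tensor (cmod s) (cmod t)" "[(s r w, x)]" "[(w, t r x)]" V v]
  by (simp add: teq_cmod_bal_cmod)

lemma teq_if_mset_eq: "mset xs = mset ys \<Longrightarrow> teq V W xs ys"
proof (induction xs arbitrary: ys)
  case Nil
  then show ?case by (simp add: teq_refl)
next
  case (Cons x xs)
  then obtain ys1 ys2 where ys: "ys = ys1 @ x # ys2"
    by (metis list.set_intros(1) set_mset_mset split_list)
  with Cons.prems have "teq V W xs (ys1 @ ys2)"
    by (intro Cons.IH) simp
  then have "teq V W ([x] @ xs) ([x] @ ys1 @ ys2)"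
    by (rule teq_app[OF teq_refl])
  also have "teq V W ([x] @ ys1 @ ys2) (ys1 @ [x] @ ys2)"
    using teq_app[OF teq_comm teq_refl, of V W "[x]" ys1 ys2] by simp
  finally show ?case
    using ys by simp
qed

lemma teq_concat_map_append:
  "teq V W (concat (map (\<lambda>(p, q). f p q @ g p q) L))
     (concat (map (\<lambda>(p, q). f p q) L) @ concat (map (\<lambda>(p, q). g p q) L))"
  by (rule teq_if_mset_eq) (induction L, auto)

lemma teq_concat_map_swap:
  "teq V W (concat (map (\<lambda>(a, b). concat (map (\<lambda>(c, d). f a b c d) L2)) L1))
           (concat (map (\<lambda>(c, d). concat (map (\<lambda>(a, b). f a b c d) L1)) L2))"
proof (rule teq_if_mset_eq)
  have mset_concat_map_append: "mset (concat (map (\<lambda>x. F x @ G x) L)) =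
      mset (concat (map F L)) + mset (concat (map G L))" for F G and L :: "'x list"
    by (induction L) auto
  show "mset (concat (map (\<lambda>(a, b). concat (map (\<lambda>(c, d). f a b c d) L2)) L1)) =
        mset (concat (map (\<lambda>(c, d). concat (map (\<lambda>(a, b). f a b c d) L1)) L2))"
  proof (induction L1)
    case Nil
    then show ?case by (induction L2) auto
  next
    case (Cons x L1)
    then show ?case
      using mset_concat_map_append[of "\<lambda>(c, d). f (fst x) (snd x) c d"
          "\<lambda>(c, d). concat (map (\<lambda>(a, b). f a b c d) L1)" L2]
      by (cases x) (simp add: case_prod_unfold)
  qed
qed

lemma teq_concat_map_cong:
  "(\<And>x. x \<in> set L \<Longrightarrow> teq V W (f x) (g x)) \<Longrightarrow> teq V W (concat (map f L)) (concat (map g L))"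
  by (induction L) (auto intro: teq.intros)

lemma teq_concat_map_cong_prod:
  "(\<And>p q. (p, q) \<in> set L \<Longrightarrow> teq V W (f p q) (g p q)) \<Longrightarrow>
    teq V W (concat (map (\<lambda>(p, q). f p q) L)) (concat (map (\<lambda>(p, q). g p q) L))"
  by (rule teq_concat_map_cong) auto

lemma teq_concat_map_nil:
  "(\<And>x. x \<in> set L \<Longrightarrow> teq V W (f x) []) \<Longrightarrow> teq V W (concat (map f L)) []"
proof (induction L)
  case Nil
  then show ?case by (simp add: teq_refl)
next
  case (Cons x L)
  then have "teq V W (f x @ concat (map f L)) ([] @ [])"
    by (intro teq_app) auto
  then show ?case by simp
qed

lemma teq_map_cong:
  assumes "\<And>p q. (p, q) \<in> set L \<Longrightarrow> teq V W [f p q] [g p q]"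
  shows "teq V W (map (\<lambda>(p, q). f p q) L) (map (\<lambda>(p, q). g p q) L)"
  using teq_concat_map_cong[of L V W "\<lambda>(p, q). [f p q]" "\<lambda>(p, q). [g p q]"] assms
  by (auto simp: concat_map_singleton_prod)

lemma teq_map_nil:
  assumes "\<And>p q. (p, q) \<in> set L \<Longrightarrow> teq V W [f p q] []"
  shows "teq V W (map (\<lambda>(p, q). f p q) L) []"
  using teq_concat_map_nil[of L V W "\<lambda>(p, q). [f p q]"] assms
  by (auto simp: concat_map_singleton_prod)

lemma teq_map_add_left:
  "teq (cmod s) W (map (\<lambda>(p, q). (f p q + f' p q, g p q)) L)
      (map (\<lambda>(p, q). (f p q, g p q)) L @ map (\<lambda>(p, q). (f' p q, g p q)) L)"
proof -
  have "teq (cmod s) W (concat (map (\<lambda>(p, q). [(f p q + f' p q, g p q)]) L))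
                (concat (map (\<lambda>(p, q). [(f p q, g p q)] @ [(f' p q, g p q)]) L))"
    by (rule teq_concat_map_cong) (auto simp: teq_cmod_addl)
  also have "teq (cmod s) W \<dots>
      (concat (map (\<lambda>(p, q). [(f p q, g p q)]) L) @ concat (map (\<lambda>(p, q). [(f' p q, g p q)]) L))"
    by (rule teq_concat_map_append)
  finally show ?thesis by (simp add: concat_map_singleton_prod)
qed

lemma teq_map_add_right:
  "teq V (cmod s) (map (\<lambda>(p, q). (g p q, f p q + f' p q)) L)
      (map (\<lambda>(p, q). (g p q, f p q)) L @ map (\<lambda>(p, q). (g p q, f' p q)) L)"
proof -
  have "teq V (cmod s) (concat (map (\<lambda>(p, q). [(g p q, f p q + f' p q)]) L))
                (concat (map (\<lambda>(p, q). [(g p q, f p q)] @ [(g p q, f' p q)]) L))"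
    by (rule teq_concat_map_cong) (auto simp: teq_cmod_addr)
  also have "teq V (cmod s) \<dots>
      (concat (map (\<lambda>(p, q). [(g p q, f p q)]) L) @ concat (map (\<lambda>(p, q). [(g p q, f' p q)]) L))"
    by (rule teq_concat_map_append)
  finally show ?thesis by (simp add: concat_map_singleton_prod)
qed

lemma teq_cmod_sum_list_left: "teq (cmod s) W [(sum_list xs, w)] (map (\<lambda>x. (x, w)) xs)"
proof (induction xs)
  case Nil
  then show ?case by (simp add: teq_cmod_zerol)
next
  case (Cons x xs)
  have "teq (cmod s) W [(x + sum_list xs, w)] ([(x, w)] @ [(sum_list xs, w)])"
    using teq_cmod_addl by simp
  also have "teq (cmod s) W \<dots> ([(x, w)] @ map (\<lambda>x. (x, w)) xs)"
    by (rule teq_app[OF teq_refl Cons.IH])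
  finally show ?case by simp
qed

lemma teq_concat_map_balanced:
  assumes "teq V W xs ys"
    and "\<And>v v' w. m_eq V v v' \<Longrightarrow> teq V' W' (g v w) (g v' w)"
    and "\<And>v w w'. m_eq W w w' \<Longrightarrow> teq V' W' (g v w) (g v w')"
    and "\<And>v v' w. teq V' W' (g (m_add V v v') w) (g v w @ g v' w)"
    and "\<And>v w w'. teq V' W' (g v (m_add W w w')) (g v w @ g v w')"
    and "\<And>w. teq V' W' (g (m_zero V) w) []"
    and "\<And>v. teq V' W' (g v (m_zero W)) []"
    and "\<And>r v w. teq V' W' (g (m_smul V r v) w) (g v (m_smul W r w))"
  shows "teq V' W' (concat (map (\<lambda>(v, w). g v w) xs)) (concat (map (\<lambda>(v, w). g v w) ys))"
  using assms(1)
proof induction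
  case (teq_sym xs ys)
  show ?case using teq_sym.IH by (rule teq.teq_sym)
next
  case (teq_trans xs ys zs)
  show ?case using teq_trans.IH by (rule teq.teq_trans)
next
  case (teq_app xs xs' ys ys')
  then show ?case by (simp add: teq.teq_app)
next
  case (teq_comm xs ys)
  then show ?case by (simp add: teq.teq_comm)
qed (simp_all add: assms teq.teq_refl)

lemma sum_list_map_balanced_eq:
  fixes f :: "_ \<Rightarrow> _ \<Rightarrow> 'b::comm_monoid_add"
  assumes "teq V W xs ys"
    and "\<And>v v' w. m_eq V v v' \<Longrightarrow> f v w = f v' w"
    and "\<And>v w w'. m_eq W w w' \<Longrightarrow> f v w = f v w'"
    and "\<And>v v' w. f (m_add V v v') w = f v w + f v' w"
    and "\<And>v w w'. f v (m_add W w w') = f v w + f v w'"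
    and "\<And>w. f (m_zero V) w = 0"
    and "\<And>v. f v (m_zero W) = 0"
    and "\<And>r v w. f (m_smul V r v) w = f v (m_smul W r w)"
  shows "sum_list (map (\<lambda>(v, w). f v w) xs) = sum_list (map (\<lambda>(v, w). f v w) ys)"
  using assms(1) by induction (simp_all add: assms add_ac)

locale setoid_module =
  fixes M :: "('v, 'k::comm_ring_1) kmod"
  assumes setoid_kmod: "setoid_kmod M"
begin

lemma
  shows m_eq_refl: "m_eq M x x"
    and m_eq_sym: "m_eq M x y \<Longrightarrow> m_eq M y x"
    and m_add_cong: "m_eq M x x' \<Longrightarrow> m_eq M y y' \<Longrightarrow> m_eq M (m_add M x y) (m_add M x' y')"
    and m_smul_cong: "m_eq M x x' \<Longrightarrow> m_eq M (m_smul M r x) (m_smul M r x')"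
    and m_add_assoc: "m_eq M (m_add M (m_add M x y) z) (m_add M x (m_add M y z))"
    and m_add_commute: "m_eq M (m_add M x y) (m_add M y x)"
    and m_zero_add: "m_eq M (m_add M (m_zero M) x) x"
    and m_neg_add: "m_eq M (m_add M (m_neg M x) x) (m_zero M)"
  using setoid_kmod unfolding setoid_kmod_def by (simp_all add: reflpD sympD)

lemma m_eq_trans [trans]: "m_eq M x y \<Longrightarrow> m_eq M y z \<Longrightarrow> m_eq M x z"
  using setoid_kmod unfolding setoid_kmod_def by (metis transpD)

lemma m_add_zero: "m_eq M (m_add M x (m_zero M)) x"
  using m_add_commute m_zero_add by (rule m_eq_trans)

lemma m_eq_zero_if_double:
  assumes "m_eq M z (m_add M z z)"
  shows "m_eq M z (m_zero M)"
proof -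
  have "m_eq M (m_zero M) (m_add M (m_neg M z) z)"
    by (rule m_eq_sym[OF m_neg_add])
  also have "m_eq M \<dots> (m_add M (m_neg M z) (m_add M z z))"
    by (rule m_add_cong[OF m_eq_refl assms])
  also have "m_eq M \<dots> (m_add M (m_add M (m_neg M z) z) z)"
    by (rule m_eq_sym[OF m_add_assoc])
  also have "m_eq M \<dots> (m_add M (m_zero M) z)"
    by (rule m_add_cong[OF m_neg_add m_eq_refl])
  also have "m_eq M \<dots> z"
    by (rule m_zero_add)
  finally show ?thesis
    by (rule m_eq_sym)
qed

lemma m_add_swap_middle:
  "m_eq M (m_add M (m_add M a b) (m_add M c d)) (m_add M (m_add M a c) (m_add M b d))"
proof -
  have "m_eq M (m_add M (m_add M a b) (m_add M c d)) (m_add M a (m_add M b (m_add M c d)))"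
    by (rule m_add_assoc)
  also have "m_eq M \<dots> (m_add M a (m_add M (m_add M b c) d))"
    by (rule m_add_cong[OF m_eq_refl m_eq_sym[OF m_add_assoc]])
  also have "m_eq M \<dots> (m_add M a (m_add M (m_add M c b) d))"
    by (rule m_add_cong[OF m_eq_refl m_add_cong[OF m_add_commute m_eq_refl]])
  also have "m_eq M \<dots> (m_add M a (m_add M c (m_add M b d)))"
    by (rule m_add_cong[OF m_eq_refl m_add_assoc])
  also have "m_eq M \<dots> (m_add M (m_add M a c) (m_add M b d))"
    by (rule m_eq_sym[OF m_add_assoc])
  finally show ?thesis .
qed

lemma msum_singleton: "m_eq M (msum M [x]) x"
  by (simp add: msum_def m_add_zero)

lemma msum_pair: "m_eq M (msum M [x, y]) (m_add M x y)"
  by (simp add: msum_def m_add_cong m_eq_refl m_add_zero)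

lemma msum_append: "m_eq M (msum M (xs @ ys)) (m_add M (msum M xs) (msum M ys))"
proof (induction xs)
  case Nil
  then show ?case by (simp add: msum_def m_eq_sym m_zero_add)
next
  case (Cons x xs)
  have "m_eq M (m_add M x (msum M (xs @ ys))) (m_add M x (m_add M (msum M xs) (msum M ys)))"
    by (rule m_add_cong[OF m_eq_refl Cons.IH])
  also have "m_eq M \<dots> (m_add M (m_add M x (msum M xs)) (msum M ys))"
    by (rule m_eq_sym[OF m_add_assoc])
  finally show ?case by (simp add: msum_def)
qed

lemma msum_map_cong:
  assumes "\<And>p q. (p, q) \<in> set L \<Longrightarrow> m_eq M (f p q) (g p q)"
  shows "m_eq M (msum M (map (\<lambda>(p, q). f p q) L)) (msum M (map (\<lambda>(p, q). g p q) L))"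
  using assms by (induction L) (auto simp: msum_def m_eq_refl intro: m_add_cong)

lemma msum_map_zero:
  assumes "\<And>p q. (p, q) \<in> set L \<Longrightarrow> m_eq M (f p q) (m_zero M)"
  shows "m_eq M (msum M (map (\<lambda>(p, q). f p q) L)) (m_zero M)"
  using assms
proof (induction L)
  case Nil
  then show ?case by (simp add: msum_def m_eq_refl)
next
  case (Cons x L)
  then show ?case
    by (cases x) (auto simp: msum_def intro: m_eq_trans[OF m_add_cong m_zero_add])
qed

lemma msum_map_add:
  "m_eq M (msum M (map (\<lambda>(p, q). m_add M (f p q) (g p q)) L))
     (m_add M (msum M (map (\<lambda>(p, q). f p q) L)) (msum M (map (\<lambda>(p, q). g p q) L)))"
proof (induction L)
  case Nil
  then show ?case by (simp add: msum_def m_eq_sym m_zero_add)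
next
  case (Cons x L)
  then show ?case
    by (cases x) (auto simp: msum_def intro: m_eq_trans[OF m_add_cong[OF m_eq_refl] m_add_swap_middle])
qed

lemma msum_concat_map:
  "m_eq M (msum M (concat (map (\<lambda>(p, q). G p q) L))) (msum M (map (\<lambda>(p, q). msum M (G p q)) L))"
proof (induction L)
  case Nil
  then show ?case by (simp add: msum_def m_eq_refl)
next
  case (Cons x L)
  have "m_eq M (msum M (G (fst x) (snd x) @ concat (map (\<lambda>(p, q). G p q) L)))
      (m_add M (msum M (G (fst x) (snd x))) (msum M (map (\<lambda>(p, q). msum M (G p q)) L)))"
    using msum_append m_add_cong[OF m_eq_refl Cons.IH] by (rule m_eq_trans)
  then show ?case
    by (simp add: msum_def case_prod_unfold)
qed

lemma msum_map_balanced_eq: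
  assumes "teq V W xs ys"
    and eql: "\<And>v v' w. m_eq V v v' \<Longrightarrow> m_eq M (f v w) (f v' w)"
    and eqr: "\<And>v w w'. m_eq W w w' \<Longrightarrow> m_eq M (f v w) (f v w')"
    and addl: "\<And>v v' w. m_eq M (f (m_add V v v') w) (m_add M (f v w) (f v' w))"
    and addr: "\<And>v w w'. m_eq M (f v (m_add W w w')) (m_add M (f v w) (f v w'))"
    and zerol: "\<And>w. m_eq M (f (m_zero V) w) (m_zero M)"
    and zeror: "\<And>v. m_eq M (f v (m_zero W)) (m_zero M)"
    and bal: "\<And>r v w. m_eq M (f (m_smul V r v) w) (f v (m_smul W r w))"
  shows "m_eq M (msum M (map (\<lambda>(v, w). f v w) xs)) (msum M (map (\<lambda>(v, w). f v w) ys))"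
  using assms(1)
proof induction
  case (teq_sym xs ys)
  show ?case using teq_sym.IH by (rule m_eq_sym)
next
  case (teq_trans xs ys zs)
  show ?case using teq_trans.IH by (rule m_eq_trans)
next
  case (teq_app xs xs' ys ys')
  show ?case
    using m_eq_trans[OF msum_append m_eq_trans[OF m_add_cong[OF teq_app.IH] m_eq_sym[OF msum_append]]]
    by simp
next
  case (teq_comm xs ys)
  show ?case
    using m_eq_trans[OF msum_append m_eq_trans[OF m_add_commute m_eq_sym[OF msum_append]]]
    by simp
next
  case (teq_addl v v' w)
  show ?case
    using m_eq_trans[OF msum_singleton m_eq_trans[OF addl m_eq_sym[OF msum_pair]]] by simp
next
  case (teq_addr v w w')
  show ?case
    using m_eq_trans[OF msum_singleton m_eq_trans[OF addr m_eq_sym[OF msum_pair]]] by simp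
next
  case (teq_zerol w)
  show ?case
    using m_eq_trans[OF msum_singleton zerol] by (simp add: msum_def)
next
  case (teq_zeror v)
  show ?case
    using m_eq_trans[OF msum_singleton zeror] by (simp add: msum_def)
qed (simp_all add: msum_def m_add_cong m_eq_refl eql eqr bal)

end

lemma teq_map_neg_left:
  assumes s: "module s" and "teq (cmod s) W xs xs'"
  shows "teq (cmod s) W (map (\<lambda>(v, w). (- v, w)) xs) (map (\<lambda>(v, w). (- v, w)) xs')"
proof -
  have "teq (cmod s) W (concat (map (\<lambda>(v, w). [(- v, w)]) xs)) (concat (map (\<lambda>(v, w). [(- v, w)]) xs'))"
    by (rule teq_concat_map_balanced[OF assms(2)])
       (simp_all add: teq_refl teq_eqr teq_addr teq_cmod_zerol teq_zeror teq_cmod_bal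
         module.scale_minus_right[OF s, symmetric] teq_cmod_addl[of s W "- _" "- _", simplified])
  then show ?thesis by (simp add: concat_map_singleton_prod)
qed

lemma teq_map_smul_left:
  assumes s: "module s" and "teq (cmod s) W xs xs'"
  shows "teq (cmod s) W (map (\<lambda>(v, w). (s r v, w)) xs) (map (\<lambda>(v, w). (s r v, w)) xs')"
proof -
  have "s r (s r' v) = s r' (s r v)" for r' v
    by (simp add: module.scale_scale[OF s] mult.commute)
  then have "teq (cmod s) W (concat (map (\<lambda>(v, w). [(s r v, w)]) xs)) (concat (map (\<lambda>(v, w). [(s r v, w)]) xs'))"
    by (intro teq_concat_map_balanced[OF assms(2)])
       (simp_all add: teq_refl teq_eqr teq_cmod_addl teq_addr teq_cmod_zerol teq_zeror teq_cmod_bal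
         module.scale_right_distrib[OF s] module.scale_zero_right[OF s])
  then show ?thesis by (simp add: concat_map_singleton_prod)
qed

lemma teq_map_neg_left_append: "teq (cmod s) W (map (\<lambda>(v, w). (- v, w)) xs @ xs) []"
proof -
  have "teq (cmod s) W (map (\<lambda>(v, w). (- v, w)) xs @ xs) (concat (map (\<lambda>(v, w). [(- v, w), (v, w)]) xs))"
    by (rule teq_if_mset_eq) (induction xs, auto)
  also have "teq (cmod s) W \<dots> []"
  proof (rule teq_concat_map_nil)
    fix x
    have "teq (cmod s) W [(- fst x, snd x), (fst x, snd x)] [(- fst x + fst x, snd x)]"
      by (rule teq_sym[OF teq_cmod_addl])
    also have "teq (cmod s) W \<dots> []"
      using teq_cmod_zerol[of s W "snd x"] by simp
    finally show "teq (cmod s) W (case x of (v, w) \<Rightarrow> [(- v, w), (v, w)]) []"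
      by (simp add: case_prod_unfold)
  qed
  finally show ?thesis .
qed

lemma setoid_kmod_tensor_cmod:
  assumes s: "module s"
  shows "setoid_kmod (tensor (cmod s) W)"
  unfolding setoid_kmod_def
  by (simp add: reflp_def symp_def transp_def teq_refl teq_sym teq_app teq_comm teq_map_neg_left[OF s]
      teq_map_smul_left[OF s] teq_map_neg_left_append module.scale_left_distrib[OF s] teq_map_add_left
      map_map_prod module.scale_scale[OF s] module.scale_one[OF s] del: map_map)
     (blast intro: teq_trans)

locale doi_hopf_integral =
  fixes sH :: "'k::comm_ring_1 \<Rightarrow> 'h::ring_1 \<Rightarrow> 'h"
    and \<Delta>H :: "'h \<Rightarrow> ('h \<times> 'h) list" and \<epsilon>H :: "'h \<Rightarrow> 'k"
    and sA :: "'k \<Rightarrow> 'a::ring_1 \<Rightarrow> 'a" and \<rho>A :: "'a \<Rightarrow> ('h \<times> 'a) list"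
    and sC :: "'k \<Rightarrow> 'c::ab_group_add \<Rightarrow> 'c" and \<Delta>C :: "'c \<Rightarrow> ('c \<times> 'c) list"
    and \<epsilon>C :: "'c \<Rightarrow> 'k" and actC :: "'c \<Rightarrow> 'h \<Rightarrow> 'c"
    and \<gamma> :: "'c \<Rightarrow> 'c \<Rightarrow> 'a"
  assumes datum: "doi_hopf_datum sH \<Delta>H \<epsilon>H sA \<rho>A sC \<Delta>C \<epsilon>C actC"
    and integral: "A_integral sH \<Delta>H sA \<rho>A sC \<Delta>C actC \<gamma>"
begin

lemma module_sH: "module sH"
  using datum by (simp add: doi_hopf_datum_def bialgebra_def kalgebra_def)

lemma
  shows module_sA: "module sA"
    and sA_mult_left: "sA r (x * y) = sA r x * y"
    and sA_mult_right: "sA r (x * y) = x * sA r y"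
    and \<rho>A_add: "teq (cmod sH) (cmod sA) (\<rho>A (a + b)) (\<rho>A a @ \<rho>A b)"
    and \<rho>A_smul: "teq (cmod sH) (cmod sA) (\<rho>A (sA r a)) (map (\<lambda>(h, x). (sH r h, x)) (\<rho>A a))"
    and \<rho>A_coassoc: "teq (cmod sH) (tensor (cmod sH) (cmod sA)) (dl \<Delta>H (\<rho>A a)) (dr \<rho>A (\<rho>A a))"
    and \<rho>A_counit: "sum_list (map (\<lambda>(h, x). sA (\<epsilon>H h) x) (\<rho>A a)) = a"
    and \<rho>A_mult: "teq (cmod sH) (cmod sA) (\<rho>A (a * b))
              (concat (map (\<lambda>(h, x). map (\<lambda>(h', y). (h * h', x * y)) (\<rho>A b)) (\<rho>A a)))"
    and \<rho>A_one: "teq (cmod sH) (cmod sA) (\<rho>A 1) [(1, 1)]"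
  using datum unfolding doi_hopf_datum_def comodule_algebra_def kalgebra_def by blast+

lemma
  shows module_sC: "module sC"
    and \<Delta>C_add: "teq (cmod sC) (cmod sC) (\<Delta>C (x + y)) (\<Delta>C x @ \<Delta>C y)"
    and \<Delta>C_smul: "teq (cmod sC) (cmod sC) (\<Delta>C (sC r x)) (map (\<lambda>(p, q). (sC r p, q)) (\<Delta>C x))"
    and \<Delta>C_coassoc: "teq (cmod sC) (tensor (cmod sC) (cmod sC)) (dl \<Delta>C (\<Delta>C x)) (dr \<Delta>C (\<Delta>C x))"
    and \<epsilon>C_add: "\<epsilon>C (x + y) = \<epsilon>C x + \<epsilon>C y"
    and \<epsilon>C_smul: "\<epsilon>C (sC r x) = r * \<epsilon>C x"
    and \<Delta>C_counit_left: "sum_list (map (\<lambda>(p, q). sC (\<epsilon>C p) q) (\<Delta>C x)) = x"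
    and \<Delta>C_counit_right: "sum_list (map (\<lambda>(p, q). sC (\<epsilon>C q) p) (\<Delta>C x)) = x"
    and actC_add_left: "actC (c + d) h = actC c h + actC d h"
    and actC_add_right: "actC c (h + g) = actC c h + actC c g"
    and actC_smul_left: "actC (sC r c) h = sC r (actC c h)"
    and actC_smul_right: "actC c (sH r h) = sC r (actC c h)"
    and actC_one: "actC c 1 = c"
    and actC_mult: "actC (actC c h) g = actC c (h * g)"
    and \<Delta>C_act: "teq (cmod sC) (cmod sC) (\<Delta>C (actC c h))
              (concat (map (\<lambda>(c1, c2). map (\<lambda>(h1, h2). (actC c1 h1, actC c2 h2)) (\<Delta>H h)) (\<Delta>C c)))"
    and \<epsilon>C_act: "\<epsilon>C (actC c h) = \<epsilon>C c * \<epsilon>H h"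
  using datum by (simp_all add: doi_hopf_datum_def module_coalgebra_def)

lemma
  shows \<gamma>_add_left: "\<gamma> (c + c') d = \<gamma> c d + \<gamma> c' d"
    and \<gamma>_smul_left: "\<gamma> (sC r c) d = sA r (\<gamma> c d)"
    and \<gamma>_add_right: "\<gamma> c (d + d') = \<gamma> c d + \<gamma> c d'"
    and \<gamma>_smul_right: "\<gamma> c (sC r d) = sA r (\<gamma> c d)"
    and \<gamma>_colinear: "teq (cmod sC) (cmod sA)
              (map (\<lambda>(c1, c2). (c1, \<gamma> c2 d)) (\<Delta>C c))
              (concat (map (\<lambda>(d1, d2). map (\<lambda>(h, x). (actC d2 h, x)) (\<rho>A (\<gamma> c d1))) (\<Delta>C d)))"
  using integral by (simp_all add: A_integral_def)

lemma \<gamma>_zero_left: "\<gamma> 0 d = 0"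
  using \<gamma>_add_left[of 0 0 d] by simp

lemma \<gamma>_zero_right: "\<gamma> c 0 = 0"
  using \<gamma>_add_right[of c 0 0] by simp

lemma actC_zero_left: "actC 0 h = 0"
  using actC_add_left[of 0 0 h] by simp

lemma actC_zero_right: "actC c 0 = 0"
  using actC_add_right[of c 0 0] by simp

lemma \<epsilon>C_zero: "\<epsilon>C 0 = 0"
  using \<epsilon>C_add[of 0 0] by simp

lemma \<Delta>C_zero: "teq (cmod sC) (cmod sC) (\<Delta>C 0) []"
proof -
  have "teq (cmod sC) (cmod sC) (\<Delta>C (sC 0 0)) (map (\<lambda>(p, q). (sC 0 p, q)) (\<Delta>C 0))"
    by (rule \<Delta>C_smul)
  also have "teq (cmod sC) (cmod sC) \<dots> []"
    by (simp add: module.scale_zero_left[OF module_sC] teq_map_nil teq_cmod_zerol)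
  finally show ?thesis
    by (simp add: module.scale_zero_left[OF module_sC])
qed

lemma \<rho>A_zero: "teq (cmod sH) (cmod sA) (\<rho>A 0) []"
proof -
  have "teq (cmod sH) (cmod sA) (\<rho>A (sA 0 0)) (map (\<lambda>(h, x). (sH 0 h, x)) (\<rho>A 0))"
    by (rule \<rho>A_smul)
  also have "teq (cmod sH) (cmod sA) \<dots> []"
    by (simp add: module.scale_zero_left[OF module_sH] teq_map_nil teq_cmod_zerol)
  finally show ?thesis
    by (simp add: module.scale_zero_left[OF module_sA])
qed

lemma teq_map_act_mult:
  assumes "teq (cmod sH) (cmod sA) P Q"
  shows "teq (cmod sC) (cmod sA) (map (\<lambda>(h, u). (actC z h, a * u)) P) (map (\<lambda>(h, u). (actC z h, a * u)) Q)"
proof -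
  have "teq (cmod sC) (cmod sA) (concat (map (\<lambda>(h, u). [(actC z h, a * u)]) P))
      (concat (map (\<lambda>(h, u). [(actC z h, a * u)]) Q))"
    by (rule teq_concat_map_balanced[OF assms])
       (simp_all add: actC_add_right actC_zero_right distrib_left teq_cmod_addl teq_cmod_addr
         teq_cmod_zerol teq_cmod_zeror actC_smul_right sA_mult_right[symmetric] teq_cmod_bal_cmod teq_refl)
  then show ?thesis by (simp add: concat_map_singleton_prod)
qed

lemma teq_map_mult:
  assumes "teq (cmod sC) (cmod sA) P Q"
  shows "teq (cmod sC) (cmod sA) (map (\<lambda>(v, w). (v, a * w)) P) (map (\<lambda>(v, w). (v, a * w)) Q)"
proof -
  have "teq (cmod sC) (cmod sA) (concat (map (\<lambda>(v, w). [(v, a * w)]) P))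
      (concat (map (\<lambda>(v, w). [(v, a * w)]) Q))"
    by (rule teq_concat_map_balanced[OF assms])
       (simp_all add: distrib_left teq_cmod_addl teq_cmod_addr teq_cmod_zerol teq_cmod_zeror
         sA_mult_right[symmetric] teq_cmod_bal_cmod teq_refl)
  then show ?thesis by (simp add: concat_map_singleton_prod)
qed

lemma teq_counit_left: "teq (cmod sC) W (map (\<lambda>(p1, p2). (sC (\<epsilon>C p1) p2, w)) (\<Delta>C c)) [(c, w)]"
proof -
  have "map (\<lambda>(p1, p2). (sC (\<epsilon>C p1) p2, w)) (\<Delta>C c) = map (\<lambda>x. (x, w)) (map (\<lambda>(p1, p2). sC (\<epsilon>C p1) p2) (\<Delta>C c))"
    by (simp add: case_prod_beta)
  also have "teq (cmod sC) W \<dots> [(c, w)]"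
    using teq_sym[OF teq_cmod_sum_list_left[where s=sC and xs="map (\<lambda>(p1, p2). sC (\<epsilon>C p1) p2) (\<Delta>C c)"]]
    by (simp add: \<Delta>C_counit_left)
  finally show ?thesis .
qed

lemma teq_counit_right: "teq (cmod sC) W (map (\<lambda>(p1, p2). (sC (\<epsilon>C p2) p1, w)) (\<Delta>C c)) [(c, w)]"
proof -
  have "map (\<lambda>(p1, p2). (sC (\<epsilon>C p2) p1, w)) (\<Delta>C c) = map (\<lambda>x. (x, w)) (map (\<lambda>(p1, p2). sC (\<epsilon>C p2) p1) (\<Delta>C c))"
    by (simp add: case_prod_beta)
  also have "teq (cmod sC) W \<dots> [(c, w)]"
    using teq_sym[OF teq_cmod_sum_list_left[where s=sC and xs="map (\<lambda>(p1, p2). sC (\<epsilon>C p2) p1) (\<Delta>C c)"]]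
    by (simp add: \<Delta>C_counit_right)
  finally show ?thesis .
qed

section \<open>Totality and the twisted integral\<close>

definition twisted_integral :: "'c \<Rightarrow> 'a \<Rightarrow> ('c \<times> 'a) list" where
  "twisted_integral c a = concat (map (\<lambda>(c12, c3). concat (map (\<lambda>(c1, c2).
      map (\<lambda>(h, x). (actC c3 h, a * x)) (\<rho>A (\<gamma> c1 c2))) (\<Delta>C c12))) (\<Delta>C c))"

text \<open>\<open>gamma_twist a x (\<Sum> y \<otimes> z) = \<Sum> z \<cdot> \<gamma>(x)(y)<-1> \<otimes> a \<gamma>(x)(y)<0>\<close>\<close>

definition gamma_twist :: "'a \<Rightarrow> 'c \<Rightarrow> ('c \<times> 'c) list \<Rightarrow> ('c \<times> 'a) list" where
  "gamma_twist a x L = concat (map (\<lambda>(y, z). map (\<lambda>(h, u). (actC z h, a * u)) (\<rho>A (\<gamma> x y))) L)"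

lemma gamma_twist_cong:
  assumes "teq (cmod sC) (cmod sC) L L'"
  shows "teq (cmod sC) (cmod sA) (gamma_twist a x L) (gamma_twist a x L')"
  unfolding gamma_twist_def
proof (rule teq_concat_map_balanced[OF assms])
  fix v v' w
  show "teq (cmod sC) (cmod sA) (map (\<lambda>(h, u). (actC w h, a * u)) (\<rho>A (\<gamma> x (m_add (cmod sC) v v'))))
       (map (\<lambda>(h, u). (actC w h, a * u)) (\<rho>A (\<gamma> x v)) @ map (\<lambda>(h, u). (actC w h, a * u)) (\<rho>A (\<gamma> x v')))"
    using teq_map_act_mult[OF \<rho>A_add, of w a "\<gamma> x v" "\<gamma> x v'"] by (simp add: \<gamma>_add_right)
next
  fix v w w'
  show "teq (cmod sC) (cmod sA) (map (\<lambda>(h, u). (actC (m_add (cmod sC) w w') h, a * u)) (\<rho>A (\<gamma> x v)))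
       (map (\<lambda>(h, u). (actC w h, a * u)) (\<rho>A (\<gamma> x v)) @ map (\<lambda>(h, u). (actC w' h, a * u)) (\<rho>A (\<gamma> x v)))"
    by (simp add: actC_add_left teq_map_add_left)
next
  fix w
  show "teq (cmod sC) (cmod sA) (map (\<lambda>(h, u). (actC w h, a * u)) (\<rho>A (\<gamma> x (m_zero (cmod sC))))) []"
    using teq_map_act_mult[OF \<rho>A_zero, of w a] by (simp add: \<gamma>_zero_right)
next
  fix v
  show "teq (cmod sC) (cmod sA) (map (\<lambda>(h, u). (actC (m_zero (cmod sC)) h, a * u)) (\<rho>A (\<gamma> x v))) []"
    by (simp add: actC_zero_left teq_map_nil teq_cmod_zerol)
next
  fix r v w
  show "teq (cmod sC) (cmod sA) (map (\<lambda>(h, u). (actC w h, a * u)) (\<rho>A (\<gamma> x (m_smul (cmod sC) r v))))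
          (map (\<lambda>(h, u). (actC (m_smul (cmod sC) r w) h, a * u)) (\<rho>A (\<gamma> x v)))"
    using teq_map_act_mult[OF \<rho>A_smul, of w a r "\<gamma> x v"]
    by (simp add: \<gamma>_smul_right actC_smul_left actC_smul_right map_map_prod del: map_map)
qed (simp_all add: teq_refl)

lemma gamma_twist_add_left: "teq (cmod sC) (cmod sA) (gamma_twist a (x + x') L) (gamma_twist a x L @ gamma_twist a x' L)"
proof -
  have "teq (cmod sC) (cmod sA) (gamma_twist a (x + x') L)
     (concat (map (\<lambda>(y, z). map (\<lambda>(h, u). (actC z h, a * u)) (\<rho>A (\<gamma> x y)) @
        map (\<lambda>(h, u). (actC z h, a * u)) (\<rho>A (\<gamma> x' y))) L))"
    unfolding gamma_twist_def
    by (rule teq_concat_map_cong) (auto simp: \<gamma>_add_left intro!: teq_map_act_mult[OF \<rho>A_add, simplified])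
  also have "teq (cmod sC) (cmod sA) \<dots> (gamma_twist a x L @ gamma_twist a x' L)"
    unfolding gamma_twist_def by (rule teq_concat_map_append)
  finally show ?thesis .
qed

lemma gamma_twist_zero_left: "teq (cmod sC) (cmod sA) (gamma_twist a 0 L) []"
  unfolding gamma_twist_def
  by (rule teq_concat_map_nil) (auto simp: \<gamma>_zero_left intro!: teq_map_act_mult[OF \<rho>A_zero, simplified])

lemma twisted_integral_coassoc:
  "teq (cmod sC) (cmod sA) (twisted_integral c a) (concat (map (\<lambda>(p, q). gamma_twist a p (\<Delta>C q)) (\<Delta>C c)))"
proof -
  have "twisted_integral c a = concat (map (\<lambda>(x, L). gamma_twist a x L) (dl \<Delta>C (\<Delta>C c)))"
    by (simp add: twisted_integral_def concat_map_dl gamma_twist_def)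
  also have "teq (cmod sC) (cmod sA) \<dots> (concat (map (\<lambda>(x, L). gamma_twist a x L) (dr \<Delta>C (\<Delta>C c))))"
    by (rule teq_concat_map_balanced[OF \<Delta>C_coassoc])
       (simp_all add: teq_refl gamma_twist_cong gamma_twist_add_left gamma_twist_zero_left,
        simp_all add: gamma_twist_def \<gamma>_smul_left \<gamma>_smul_right teq_refl map_map_prod del: map_map)
  also have "\<dots> = concat (map (\<lambda>(p, q). gamma_twist a p (\<Delta>C q)) (\<Delta>C c))"
    by (simp add: concat_map_dr)
  finally show ?thesis .
qed

lemma gamma_twist_comult:
  "teq (cmod sC) (cmod sA) (gamma_twist a p (\<Delta>C q)) (map (\<lambda>(p1, p2). (p1, a * \<gamma> p2 q)) (\<Delta>C p))"
proof -
  have "map (\<lambda>(v, w). (v, a * w)) (concat (map (\<lambda>(d1, d2). map (\<lambda>(h, x). (actC d2 h, x)) (\<rho>A (\<gamma> p d1))) L))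
      = gamma_twist a p L" for L
    by (induction L) (auto simp: gamma_twist_def map_map_prod simp del: map_map)
  then show ?thesis
    using teq_sym[OF teq_map_mult[OF \<gamma>_colinear[of q p], of a]] by (simp add: map_map_prod del: map_map)
qed

definition gamma_sum :: "('c \<times> 'c) list \<Rightarrow> 'a" where
  "gamma_sum L = sum_list (map (\<lambda>(y, z). \<gamma> y z) L)"

lemma gamma_sum_Nil: "gamma_sum [] = 0"
  and gamma_sum_append: "gamma_sum (L @ L') = gamma_sum L + gamma_sum L'"
  by (simp_all add: gamma_sum_def)

lemma gamma_sum_teq: "teq (cmod sC) (cmod sC) L L' \<Longrightarrow> gamma_sum L = gamma_sum L'"
  unfolding gamma_sum_def
  by (erule sum_list_map_balanced_eq)
     (simp_all add: \<gamma>_add_left \<gamma>_add_right \<gamma>_zero_left \<gamma>_zero_right \<gamma>_smul_left \<gamma>_smul_right)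

lemma gamma_sum_smul: "gamma_sum (map (\<lambda>(v, w). (sC r v, w)) L) = sA r (gamma_sum L)"
  unfolding gamma_sum_def
  by (induction L) (auto simp: \<gamma>_smul_left module.scale_right_distrib[OF module_sA] module.scale_zero_right[OF module_sA])

lemma \<Delta>C_coassoc_gamma:
  "teq (cmod sC) (cmod sA) (concat (map (\<lambda>(p, q). map (\<lambda>(p1, p2). (p1, a * \<gamma> p2 q)) (\<Delta>C p)) (\<Delta>C c)))
     (map (\<lambda>(p, q). (p, a * gamma_sum (\<Delta>C q))) (\<Delta>C c))"
proof -
  let ?g = "\<lambda>x L. [(x, a * gamma_sum L)]"
  have "concat (map (\<lambda>(p, q). map (\<lambda>(p1, p2). (p1, a * \<gamma> p2 q)) (\<Delta>C p)) (\<Delta>C c))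
      = concat (map (\<lambda>(x, L). ?g x L) (dl \<Delta>C (\<Delta>C c)))"
    by (simp only: concat_map_dl) (simp add: gamma_sum_def concat_map_singleton_prod)
  also have "teq (cmod sC) (cmod sA) \<dots> (concat (map (\<lambda>(x, L). ?g x L) (dr \<Delta>C (\<Delta>C c))))"
    by (rule teq_concat_map_balanced[OF \<Delta>C_coassoc])
       (simp_all add: teq_refl gamma_sum_teq teq_cmod_addl gamma_sum_append distrib_left teq_cmod_addr
         teq_cmod_zerol gamma_sum_Nil teq_cmod_zeror gamma_sum_smul sA_mult_right[symmetric] teq_cmod_bal_cmod)
  also have "\<dots> = map (\<lambda>(p, q). (p, a * gamma_sum (\<Delta>C q))) (\<Delta>C c)"
    by (simp only: concat_map_dr) (simp add: concat_map_singleton_prod)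
  finally show ?thesis .
qed

lemma total_imp_twisted_integral:
  assumes "total_integral sA \<Delta>C \<epsilon>C \<gamma>"
  shows "teq (cmod sC) (cmod sA) (twisted_integral c a) [(c, a)]"
proof -
  have "teq (cmod sC) (cmod sA) (twisted_integral c a) (concat (map (\<lambda>(p, q). gamma_twist a p (\<Delta>C q)) (\<Delta>C c)))"
    by (rule twisted_integral_coassoc)
  also have "teq (cmod sC) (cmod sA) \<dots> (concat (map (\<lambda>(p, q). map (\<lambda>(p1, p2). (p1, a * \<gamma> p2 q)) (\<Delta>C p)) (\<Delta>C c)))"
    by (rule teq_concat_map_cong) (auto simp: gamma_twist_comult)
  also have "teq (cmod sC) (cmod sA) \<dots> (map (\<lambda>(p, q). (p, a * gamma_sum (\<Delta>C q))) (\<Delta>C c))"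
    by (rule \<Delta>C_coassoc_gamma)
  also have "\<dots> = map (\<lambda>(p, q). (p, sA (\<epsilon>C q) a)) (\<Delta>C c)"
    using assms by (simp add: gamma_sum_def total_integral_def sA_mult_right[symmetric])
  also have "teq (cmod sC) (cmod sA) \<dots> (map (\<lambda>(p, q). (sC (\<epsilon>C q) p, a)) (\<Delta>C c))"
    by (rule teq_map_cong) (rule teq_sym[OF teq_cmod_bal_cmod])
  also have "teq (cmod sC) (cmod sA) \<dots> [(c, a)]"
    by (rule teq_counit_right)
  finally show ?thesis .
qed

definition counit_tensor :: "('c \<times> 'a) list \<Rightarrow> 'a" where
  "counit_tensor P = sum_list (map (\<lambda>(v, w). sA (\<epsilon>C v) w) P)"

lemma counit_tensor_Nil: "counit_tensor [] = 0"
  and counit_tensor_append: "counit_tensor (P @ Q) = counit_tensor P + counit_tensor Q"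
  by (simp_all add: counit_tensor_def)

lemma counit_tensor_teq: "teq (cmod sC) (cmod sA) P Q \<Longrightarrow> counit_tensor P = counit_tensor Q"
  unfolding counit_tensor_def
  by (erule sum_list_map_balanced_eq)
     (simp_all add: \<epsilon>C_add \<epsilon>C_zero \<epsilon>C_smul module.scale_left_distrib[OF module_sA]
       module.scale_right_distrib[OF module_sA] module.scale_scale[OF module_sA]
       module.scale_zero_left[OF module_sA] module.scale_zero_right[OF module_sA] mult.commute)

lemma counit_tensor_concat_map:
  "counit_tensor (concat (map (\<lambda>(p, q). G p q) L)) = sum_list (map (\<lambda>(p, q). counit_tensor (G p q)) L)"
  by (induction L) (auto simp: counit_tensor_def)

lemma counit_tensor_act:
  "counit_tensor (map (\<lambda>(h, x). (actC z h, x)) R) = sA (\<epsilon>C z) (sum_list (map (\<lambda>(h, x). sA (\<epsilon>H h) x) R))"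
  by (induction R) (auto simp: counit_tensor_def \<epsilon>C_act module.scale_right_distrib[OF module_sA]
      module.scale_zero_right[OF module_sA] module.scale_scale[OF module_sA])

lemma counit_tensor_gamma_twist:
  "counit_tensor (gamma_twist 1 x L) = \<gamma> x (sum_list (map (\<lambda>(y, z). sC (\<epsilon>C z) y) L))"
  by (induction L) (auto simp: gamma_twist_def counit_tensor_Nil counit_tensor_append counit_tensor_act
      \<rho>A_counit \<gamma>_smul_right \<gamma>_add_right \<gamma>_zero_right)

lemma total_if_gamma_twist_unit:
  assumes "\<And>c. teq (cmod sC) (cmod sA) (concat (map (\<lambda>(p, q). gamma_twist 1 p (\<Delta>C q)) (\<Delta>C c))) [(c, 1)]"
  shows "total_integral sA \<Delta>C \<epsilon>C \<gamma>"
  unfolding total_integral_def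
proof
  fix c
  have "sA (\<epsilon>C c) 1 = counit_tensor [(c, 1)]"
    by (simp add: counit_tensor_def)
  also have "\<dots> = counit_tensor (concat (map (\<lambda>(p, q). gamma_twist 1 p (\<Delta>C q)) (\<Delta>C c)))"
    using counit_tensor_teq[OF assms] by simp
  also have "\<dots> = sum_list (map (\<lambda>(p, q). \<gamma> p q) (\<Delta>C c))"
    by (simp add: counit_tensor_concat_map counit_tensor_gamma_twist \<Delta>C_counit_right)
  finally show "sum_list (map (\<lambda>(p, q). \<gamma> p q) (\<Delta>C c)) = sA (\<epsilon>C c) 1" ..
qed

lemma total_iff_twisted_integral:
  "total_integral sA \<Delta>C \<epsilon>C \<gamma> \<longleftrightarrow> (\<forall>c a. teq (cmod sC) (cmod sA) (twisted_integral c a) [(c, a)])"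
proof
  assume "\<forall>c a. teq (cmod sC) (cmod sA) (twisted_integral c a) [(c, a)]"
  then show "total_integral sA \<Delta>C \<epsilon>C \<gamma>"
    by (meson total_if_gamma_twist_unit twisted_integral_coassoc teq_sym teq_trans)
qed (blast intro: total_imp_twisted_integral)

end

section \<open>Normalization in Doi-Hopf modules\<close>

locale doi_hopf_module_integral = doi_hopf_integral +
  fixes M and actM and \<rho>M
  assumes doi_hopf_module: "doi_hopf_module sH sA \<rho>A sC \<Delta>C \<epsilon>C actC M actM \<rho>M"
begin

sublocale setoid_module M
  using doi_hopf_module by unfold_locales (simp add: doi_hopf_module_def)

lemma
  shows actM_cong: "m_eq M m m' \<Longrightarrow> m_eq M (actM m a) (actM m' a)"
    and actM_add_left: "m_eq M (actM (m_add M m m') a) (m_add M (actM m a) (actM m' a))"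
    and actM_add_right: "m_eq M (actM m (a + b)) (m_add M (actM m a) (actM m b))"
    and actM_smul_left: "m_eq M (actM (m_smul M r m) a) (m_smul M r (actM m a))"
    and actM_smul_right: "m_eq M (actM m (sA r a)) (m_smul M r (actM m a))"
    and actM_one: "m_eq M (actM m 1) m"
    and \<rho>M_coassoc: "teq (cmod sC) (tensor (cmod sC) M) (dl \<Delta>C (\<rho>M m)) (dr \<rho>M (\<rho>M m))"
    and \<rho>M_counit: "m_eq M (msum M (map (\<lambda>(c, x). m_smul M (\<epsilon>C c) x) (\<rho>M m))) m"
  using doi_hopf_module by (simp_all add: doi_hopf_module_def)

lemma actM_zero_right: "m_eq M (actM m 0) (m_zero M)"
  using m_eq_zero_if_double[of "actM m 0"] actM_add_right[of m 0 0] by simp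

lemma actM_zero_left: "m_eq M (actM (m_zero M) a) (m_zero M)"
proof (rule m_eq_zero_if_double)
  have "m_eq M (actM (m_zero M) a) (actM (m_add M (m_zero M) (m_zero M)) a)"
    by (rule actM_cong[OF m_eq_sym[OF m_zero_add]])
  also have "m_eq M \<dots> (m_add M (actM (m_zero M) a) (actM (m_zero M) a))"
    by (rule actM_add_left)
  finally show "m_eq M (actM (m_zero M) a) (m_add M (actM (m_zero M) a) (actM (m_zero M) a))" .
qed

lemma msum_actM: "m_eq M (msum M (map (\<lambda>(p, q). actM x (g p q)) L)) (actM x (sum_list (map (\<lambda>(p, q). g p q) L)))"
proof (induction L)
  case Nil
  then show ?case by (simp add: msum_def m_eq_sym[OF actM_zero_right])
next
  case (Cons y L)
  have "m_eq M (m_add M (actM x (g (fst y) (snd y))) (msum M (map (\<lambda>(p, q). actM x (g p q)) L)))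
      (actM x (g (fst y) (snd y) + sum_list (map (\<lambda>(p, q). g p q) L)))"
    using m_add_cong[OF m_eq_refl Cons.IH] m_eq_sym[OF actM_add_right] by (rule m_eq_trans)
  then show ?case by (simp add: msum_def case_prod_unfold)
qed

definition gamma_act where
  "gamma_act c L = msum M (map (\<lambda>(d, x). actM x (\<gamma> c d)) L)"

lemma gamma_act_cong:
  assumes "teq (cmod sC) M L L'"
  shows "m_eq M (gamma_act c L) (gamma_act c L')"
  unfolding gamma_act_def
proof (rule msum_map_balanced_eq[OF assms])
  fix r d x
  show "m_eq M (actM x (\<gamma> c (m_smul (cmod sC) r d))) (actM (m_smul M r x) (\<gamma> c d))"
    using m_eq_trans[OF actM_smul_right m_eq_sym[OF actM_smul_left]] by (simp add: \<gamma>_smul_right)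
qed (simp_all add: m_eq_refl actM_cong \<gamma>_add_right actM_add_right actM_add_left \<gamma>_zero_right
    actM_zero_right actM_zero_left)

lemma gamma_act_coassoc: "m_eq M (msum M (map (\<lambda>(x, L). gamma_act x L) (dl \<Delta>C (\<rho>M m))))
                        (msum M (map (\<lambda>(x, L). gamma_act x L) (dr \<rho>M (\<rho>M m))))"
proof (rule msum_map_balanced_eq[OF \<rho>M_coassoc])
  fix v v' w
  have "m_eq M (gamma_act (v + v') w) (msum M (map (\<lambda>(d, x). m_add M (actM x (\<gamma> v d)) (actM x (\<gamma> v' d))) w))"
    unfolding gamma_act_def \<gamma>_add_left by (rule msum_map_cong[OF actM_add_right])
  then show "m_eq M (gamma_act (m_add (cmod sC) v v') w) (m_add M (gamma_act v w) (gamma_act v' w))"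
    using m_eq_trans[OF _ msum_map_add] by (simp add: gamma_act_def)
next
  fix v w w'
  show "m_eq M (gamma_act v (m_add (tensor (cmod sC) M) w w')) (m_add M (gamma_act v w) (gamma_act v w'))"
    by (simp add: gamma_act_def msum_append)
next
  fix w
  show "m_eq M (gamma_act (m_zero (cmod sC)) w) (m_zero M)"
    unfolding gamma_act_def by (simp add: \<gamma>_zero_left msum_map_zero[OF actM_zero_right])
next
  fix v
  show "m_eq M (gamma_act v (m_zero (tensor (cmod sC) M))) (m_zero M)"
    by (simp add: gamma_act_def msum_def m_eq_refl)
next
  fix r v w
  show "m_eq M (gamma_act (m_smul (cmod sC) r v) w) (gamma_act v (m_smul (tensor (cmod sC) M) r w))"
    by (simp add: gamma_act_def \<gamma>_smul_left \<gamma>_smul_right map_map_prod m_eq_refl del: map_map)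
qed (simp_all add: m_eq_refl gamma_act_cong)

lemma msum_gamma_act_comult:
  assumes "total_integral sA \<Delta>C \<epsilon>C \<gamma>"
  shows "m_eq M (msum M (map (\<lambda>(p1, p2). gamma_act p1 [(p2, x)]) (\<Delta>C c))) (m_smul M (\<epsilon>C c) x)"
proof -
  have "m_eq M (msum M (map (\<lambda>(p1, p2). gamma_act p1 [(p2, x)]) (\<Delta>C c)))
               (msum M (map (\<lambda>(p1, p2). actM x (\<gamma> p1 p2)) (\<Delta>C c)))"
    by (rule msum_map_cong) (simp add: gamma_act_def msum_singleton)
  also have "m_eq M \<dots> (actM x (sum_list (map (\<lambda>(p1, p2). \<gamma> p1 p2) (\<Delta>C c))))"
    by (rule msum_actM)
  also have "\<dots> = actM x (sA (\<epsilon>C c) 1)"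
    using assms by (simp add: total_integral_def)
  also have "m_eq M \<dots> (m_smul M (\<epsilon>C c) (actM x 1))"
    by (rule actM_smul_right)
  also have "m_eq M \<dots> (m_smul M (\<epsilon>C c) x)"
    by (rule m_smul_cong[OF actM_one])
  finally show ?thesis .
qed

lemma total_imp_normalizes:
  assumes "total_integral sA \<Delta>C \<epsilon>C \<gamma>"
  shows "integral_normalizes M actM \<rho>M \<gamma>"
  unfolding integral_normalizes_def
proof
  fix m
  have "m_eq M (msum M (concat (map (\<lambda>(c, y). map (\<lambda>(d, x). actM x (\<gamma> c d)) (\<rho>M y)) (\<rho>M m))))
                (msum M (map (\<lambda>(c, y). gamma_act c (\<rho>M y)) (\<rho>M m)))"
    unfolding gamma_act_def by (rule msum_concat_map)
  also have "msum M (map (\<lambda>(c, y). gamma_act c (\<rho>M y)) (\<rho>M m)) = msum M (map (\<lambda>(x, L). gamma_act x L) (dr \<rho>M (\<rho>M m)))"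
    by (simp add: dr_def map_map_prod del: map_map)
  also have "m_eq M \<dots> (msum M (map (\<lambda>(x, L). gamma_act x L) (dl \<Delta>C (\<rho>M m))))"
    by (rule m_eq_sym[OF gamma_act_coassoc])
  also have "\<dots> = msum M (concat (map (\<lambda>(p, q). map (\<lambda>(p1, p2). gamma_act p1 [(p2, q)]) (\<Delta>C p)) (\<rho>M m)))"
    by (simp only: map_dl)
  also have "m_eq M \<dots> (msum M (map (\<lambda>(p, q). msum M (map (\<lambda>(p1, p2). gamma_act p1 [(p2, q)]) (\<Delta>C p))) (\<rho>M m)))"
    by (rule msum_concat_map)
  also have "m_eq M \<dots> (msum M (map (\<lambda>(p, q). m_smul M (\<epsilon>C p) q) (\<rho>M m)))"
    using assms by (intro msum_map_cong msum_gamma_act_comult)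
  also have "m_eq M \<dots> m"
    by (rule \<rho>M_counit)
  finally show "m_eq M (msum M (concat (map (\<lambda>(c, y). map (\<lambda>(d, x). actM x (\<gamma> c d)) (\<rho>M y)) (\<rho>M m)))) m" .
qed

end

context doi_hopf_integral
begin

lemma total_imp_integral_normalizes:
  assumes "total_integral sA \<Delta>C \<epsilon>C \<gamma>"
    and "doi_hopf_module sH sA \<rho>A sC \<Delta>C \<epsilon>C actC M actM \<rho>M"
  shows "integral_normalizes M actM \<rho>M \<gamma>"
proof -
  interpret doi_hopf_module_integral sH \<Delta>H \<epsilon>H sA \<rho>A sC \<Delta>C \<epsilon>C actC \<gamma> M actM \<rho>M
    by unfold_locales (fact assms(2))
  show ?thesis
    using assms(1) by (rule total_imp_normalizes)
qed

section \<open>The Doi-Hopf module \<open>C \<otimes> A\<close>\<close>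

abbreviation tensor_CA :: "(('c \<times> 'a) list, 'k) kmod" where
  "tensor_CA \<equiv> tensor (cmod sC) (cmod sA)"

definition tensor_act :: "('c \<times> 'a) list \<Rightarrow> 'a \<Rightarrow> ('c \<times> 'a) list" where
  "tensor_act m b = concat (map (\<lambda>(c, a). map (\<lambda>(h, x). (actC c h, a * x)) (\<rho>A b)) m)"

lemma tensor_act_singleton: "tensor_act [(q, x0)] b = map (\<lambda>(h, y). (actC q h, x0 * y)) (\<rho>A b)"
  by (simp add: tensor_act_def)

lemma tensor_act_append: "tensor_act (m @ m') b = tensor_act m b @ tensor_act m' b"
  by (simp add: tensor_act_def)

lemma tensor_act_concat_map:
  "tensor_act (concat (map (\<lambda>(p, q). G p q) L)) b = concat (map (\<lambda>(p, q). tensor_act (G p q) b) L)"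
  by (induction L) (auto simp: tensor_act_def)

lemma tensor_act_cong:
  assumes "teq (cmod sC) (cmod sA) m m'"
  shows "teq (cmod sC) (cmod sA) (tensor_act m b) (tensor_act m' b)"
  unfolding tensor_act_def
  by (rule teq_concat_map_balanced[OF assms])
     (auto simp: teq_refl actC_add_left teq_map_add_left distrib_right teq_map_add_right actC_zero_left
        teq_map_nil teq_cmod_zerol teq_cmod_zeror actC_smul_left sA_mult_left[symmetric]
        intro!: teq_map_cong teq_cmod_bal_cmod)

lemma tensor_act_add_right: "teq (cmod sC) (cmod sA) (tensor_act m (a + b)) (tensor_act m a @ tensor_act m b)"
proof -
  have "teq (cmod sC) (cmod sA) (tensor_act m (a + b))
     (concat (map (\<lambda>(c, x). map (\<lambda>(h, y). (actC c h, x * y)) (\<rho>A a) @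
        map (\<lambda>(h, y). (actC c h, x * y)) (\<rho>A b)) m))"
    unfolding tensor_act_def
    by (rule teq_concat_map_cong) (auto intro: teq_map_act_mult[OF \<rho>A_add, simplified])
  also have "teq (cmod sC) (cmod sA) \<dots> (tensor_act m a @ tensor_act m b)"
    unfolding tensor_act_def by (rule teq_concat_map_append)
  finally show ?thesis .
qed

lemma tensor_act_smul_left:
  "tensor_act (map (\<lambda>(v, w). (sC r v, w)) m) a = map (\<lambda>(v, w). (sC r v, w)) (tensor_act m a)"
  by (induction m) (auto simp: tensor_act_def map_map_prod actC_smul_left simp del: map_map)

lemma tensor_act_smul_right:
  "teq (cmod sC) (cmod sA) (tensor_act m (sA r a)) (map (\<lambda>(v, w). (sC r v, w)) (tensor_act m a))"
proof -
  have "map (\<lambda>(v, w). (sC r v, w)) (tensor_act m a) =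
      concat (map (\<lambda>(c, x). map (\<lambda>(h, y). (actC c (sH r h), x * y)) (\<rho>A a)) m)"
    by (induction m) (auto simp: tensor_act_def map_map_prod actC_smul_right simp del: map_map)
  moreover have "teq (cmod sC) (cmod sA) (tensor_act m (sA r a))
      (concat (map (\<lambda>(c, x). map (\<lambda>(h, y). (actC c (sH r h), x * y)) (\<rho>A a)) m))"
    unfolding tensor_act_def
  proof (rule teq_concat_map_cong_prod)
    fix c x
    show "teq (cmod sC) (cmod sA) (map (\<lambda>(h, y). (actC c h, x * y)) (\<rho>A (sA r a)))
        (map (\<lambda>(h, y). (actC c (sH r h), x * y)) (\<rho>A a))"
      using teq_map_act_mult[OF \<rho>A_smul, of c x r a] by (simp add: map_map_prod del: map_map)
  qed
  ultimately show ?thesis by simp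
qed

lemma tensor_act_one: "teq (cmod sC) (cmod sA) (tensor_act m 1) m"
proof -
  have "teq (cmod sC) (cmod sA) (tensor_act m 1) (concat (map (\<lambda>(c, x). [(c, x)]) m))"
    unfolding tensor_act_def
  proof (rule teq_concat_map_cong_prod)
    fix c x
    show "teq (cmod sC) (cmod sA) (map (\<lambda>(h, y). (actC c h, x * y)) (\<rho>A 1)) [(c, x)]"
      using teq_map_act_mult[OF \<rho>A_one, of c x] by (simp add: actC_one)
  qed
  then show ?thesis by (simp add: concat_map_singleton_prod)
qed

lemma tensor_act_mult: "teq (cmod sC) (cmod sA) (tensor_act (tensor_act m a) b) (tensor_act m (a * b))"
proof -
  have act_map: "tensor_act (map (\<lambda>(h, x). (actC c h, x0 * x)) R) b =
      map (\<lambda>(h, u). (actC c h, x0 * u)) (concat (map (\<lambda>(h, x). map (\<lambda>(h', y). (h * h', x * y)) (\<rho>A b)) R))"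
    for c x0 R
    by (induction R) (auto simp: tensor_act_def actC_mult mult.assoc map_map_prod simp del: map_map)
  have "tensor_act (tensor_act m a) b = concat (map (\<lambda>(c, x0). map (\<lambda>(h, u). (actC c h, x0 * u))
      (concat (map (\<lambda>(h, x). map (\<lambda>(h', y). (h * h', x * y)) (\<rho>A b)) (\<rho>A a)))) m)"
    by (simp add: tensor_act_def[of m a] tensor_act_concat_map act_map)
  also have "teq (cmod sC) (cmod sA) \<dots> (tensor_act m (a * b))"
    unfolding tensor_act_def
    by (rule teq_concat_map_cong) (auto intro: teq_map_act_mult[OF teq_sym[OF \<rho>A_mult]])
  finally show ?thesis .
qed

lemma teq_map_nested:
  assumes "teq (cmod sC) (cmod sC) P Q"
  shows "teq (cmod sC) tensor_CA (map (\<lambda>(c1, c2). (c1, [(c2, x)])) P) (map (\<lambda>(c1, c2). (c1, [(c2, x)])) Q)"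
proof -
  have "teq (cmod sC) tensor_CA (concat (map (\<lambda>(c1, c2). [(c1, [(c2, x)])]) P))
           (concat (map (\<lambda>(c1, c2). [(c1, [(c2, x)])]) Q))"
    by (rule teq_concat_map_balanced[OF assms])
       (simp_all add: teq_refl teq_cmod_addl teq_nested_addl teq_cmod_zerol teq_nested_zerol teq_nested_bal_outer)
  then show ?thesis by (simp add: concat_map_singleton_prod)
qed

lemma dl_cong:
  assumes "teq (cmod sC) (cmod sA) m m'"
  shows "teq (cmod sC) tensor_CA (dl \<Delta>C m) (dl \<Delta>C m')"
proof -
  have bal: "teq (cmod sC) tensor_CA [(sC r c1, [(c2, x)])] [(c1, [(c2, sA r x)])]" for r c1 c2 x
    using teq_nested_bal_outer teq_nested_bal_inner by (rule teq_trans)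
  show ?thesis
    unfolding dl_def
  proof (rule teq_concat_map_balanced[OF assms])
    fix v v' :: 'c and w :: 'a
    show "teq (cmod sC) tensor_CA (map (\<lambda>(p1, p2). (p1, [(p2, w)])) (\<Delta>C (m_add (cmod sC) v v')))
       (map (\<lambda>(p1, p2). (p1, [(p2, w)])) (\<Delta>C v) @ map (\<lambda>(p1, p2). (p1, [(p2, w)])) (\<Delta>C v'))"
      using teq_map_nested[OF \<Delta>C_add[of v v'], of w] by simp
  next
    fix v :: 'c and w w' :: 'a
    have "teq (cmod sC) tensor_CA (concat (map (\<lambda>(p1, p2). [(p1, [(p2, w + w')])]) (\<Delta>C v)))
        (concat (map (\<lambda>(p1, p2). [(p1, [(p2, w)])] @ [(p1, [(p2, w')])]) (\<Delta>C v)))"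
      by (rule teq_concat_map_cong) (auto simp: teq_nested_addr)
    also have "teq (cmod sC) tensor_CA \<dots> (concat (map (\<lambda>(p1, p2). [(p1, [(p2, w)])]) (\<Delta>C v)) @
        concat (map (\<lambda>(p1, p2). [(p1, [(p2, w')])]) (\<Delta>C v)))"
      by (rule teq_concat_map_append)
    finally show "teq (cmod sC) tensor_CA (map (\<lambda>(p1, p2). (p1, [(p2, m_add (cmod sA) w w')])) (\<Delta>C v))
       (map (\<lambda>(p1, p2). (p1, [(p2, w)])) (\<Delta>C v) @ map (\<lambda>(p1, p2). (p1, [(p2, w')])) (\<Delta>C v))"
      by (simp add: concat_map_singleton_prod)
  next
    fix w :: 'a
    show "teq (cmod sC) tensor_CA (map (\<lambda>(p1, p2). (p1, [(p2, w)])) (\<Delta>C (m_zero (cmod sC)))) []"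
      using teq_map_nested[OF \<Delta>C_zero, of w] by simp
  next
    fix v :: 'c
    show "teq (cmod sC) tensor_CA (map (\<lambda>(p1, p2). (p1, [(p2, m_zero (cmod sA))])) (\<Delta>C v)) []"
      by (simp add: teq_map_nil teq_nested_zeror)
  next
    fix r and v :: 'c and w :: 'a
    have "teq (cmod sC) tensor_CA (map (\<lambda>(p1, p2). (p1, [(p2, w)])) (\<Delta>C (sC r v)))
        (map (\<lambda>(p1, p2). (sC r p1, [(p2, w)])) (\<Delta>C v))"
      using teq_map_nested[OF \<Delta>C_smul[of r v], of w] by (simp add: map_map_prod del: map_map)
    also have "teq (cmod sC) tensor_CA \<dots> (map (\<lambda>(p1, p2). (p1, [(p2, sA r w)])) (\<Delta>C v))"
      by (rule teq_map_cong) (rule bal)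
    finally show "teq (cmod sC) tensor_CA (map (\<lambda>(p1, p2). (p1, [(p2, w)])) (\<Delta>C (m_smul (cmod sC) r v)))
       (map (\<lambda>(p1, p2). (p1, [(p2, m_smul (cmod sA) r w)])) (\<Delta>C v))"
      by simp
  qed (simp_all add: teq_refl)
qed

lemma dl_smul: "teq (cmod sC) tensor_CA (dl \<Delta>C (map (\<lambda>(v, w). (sC r v, w)) m))
   (map (\<lambda>(c, x). (sC r c, x)) (dl \<Delta>C m))"
proof -
  have "map (\<lambda>(c, x). (sC r c, x)) (dl \<Delta>C m) =
      concat (map (\<lambda>(c, x). map (\<lambda>(p1, p2). (sC r p1, [(p2, x)])) (\<Delta>C c)) m)"
    by (induction m) (auto simp: dl_def map_map_prod simp del: map_map)
  moreover have "teq (cmod sC) tensor_CA (dl \<Delta>C (map (\<lambda>(v, w). (sC r v, w)) m))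
      (concat (map (\<lambda>(c, x). map (\<lambda>(p1, p2). (sC r p1, [(p2, x)])) (\<Delta>C c)) m))"
    unfolding dl_def map_map_prod
  proof (rule teq_concat_map_cong_prod)
    fix c x
    show "teq (cmod sC) tensor_CA (map (\<lambda>(p1, p2). (p1, [(p2, x)])) (\<Delta>C (sC r c)))
        (map (\<lambda>(p1, p2). (sC r p1, [(p2, x)])) (\<Delta>C c))"
      using teq_map_nested[OF \<Delta>C_smul[of r c], of x] by (simp add: map_map_prod del: map_map)
  qed
  ultimately show ?thesis by simp
qed

lemma dl_coassoc_nested: "teq (cmod sC) (tensor (cmod sC) tensor_CA)
    (dl \<Delta>C (map (\<lambda>(p1, p2). (p1, [(p2, x0)])) (\<Delta>C c)))
    (dr (dl \<Delta>C) (map (\<lambda>(p1, p2). (p1, [(p2, x0)])) (\<Delta>C c)))"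
proof -
  let ?F = "\<lambda>x L. [(x, map (\<lambda>(y, z). (y, [(z, x0)])) L)]"
  have "dl \<Delta>C (map (\<lambda>(p1, p2). (p1, [(p2, x0)])) (\<Delta>C c)) = concat (map (\<lambda>(x, L). ?F x L) (dl \<Delta>C (\<Delta>C c)))"
    by (simp only: concat_map_dl) (simp add: dl_def map_map_prod concat_map_singleton_prod del: map_map)
  also have "teq (cmod sC) (tensor (cmod sC) tensor_CA) \<dots> (concat (map (\<lambda>(x, L). ?F x L) (dr \<Delta>C (\<Delta>C c))))"
  proof (rule teq_concat_map_balanced[OF \<Delta>C_coassoc])
    fix v and w w' :: "('c \<times> 'c) list"
    assume "m_eq (tensor (cmod sC) (cmod sC)) w w'"
    then have "teq (cmod sC) tensor_CA (map (\<lambda>(y, z). (y, [(z, x0)])) w) (map (\<lambda>(y, z). (y, [(z, x0)])) w')"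
      using teq_map_nested by simp
    then show "teq (cmod sC) (tensor (cmod sC) tensor_CA) (?F v w) (?F v w')"
      using teq_eqr[of "tensor (cmod sC) tensor_CA"] by simp
  next
    fix r v and w :: "('c \<times> 'c) list"
    show "teq (cmod sC) (tensor (cmod sC) tensor_CA) (?F (m_smul (cmod sC) r v) w)
        (?F v (m_smul (tensor (cmod sC) (cmod sC)) r w))"
      using teq_cmod_bal[of sC "tensor (cmod sC) tensor_CA" r v "map (\<lambda>(y, z). (y, [(z, x0)])) w"]
      by (simp add: map_map_prod del: map_map)
  qed (simp_all add: teq_refl teq_cmod_addl teq_tensor_addr teq_cmod_zerol teq_tensor_zeror)
  also have "concat (map (\<lambda>(x, L). ?F x L) (dr \<Delta>C (\<Delta>C c))) =
      dr (dl \<Delta>C) (map (\<lambda>(p1, p2). (p1, [(p2, x0)])) (\<Delta>C c))"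
    by (simp only: concat_map_dr) (simp add: dr_def dl_def map_map_prod concat_map_singleton_prod del: map_map)
  finally show ?thesis .
qed

lemma dl_coassoc: "teq (cmod sC) (tensor (cmod sC) tensor_CA) (dl \<Delta>C (dl \<Delta>C m)) (dr (dl \<Delta>C) (dl \<Delta>C m))"
proof -
  have "dl \<Delta>C (dl \<Delta>C m) = concat (map (\<lambda>(c, x0). dl \<Delta>C (map (\<lambda>(p1, p2). (p1, [(p2, x0)])) (\<Delta>C c))) m)"
    by (simp only: dl_def[of \<Delta>C m] dl_concat_map)
  moreover have "dr (dl \<Delta>C) (dl \<Delta>C m) =
      concat (map (\<lambda>(c, x0). dr (dl \<Delta>C) (map (\<lambda>(p1, p2). (p1, [(p2, x0)])) (\<Delta>C c))) m)"
    by (induction m) (auto simp: dl_def[of \<Delta>C] dr_def)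
  ultimately show ?thesis
    by (auto intro: teq_concat_map_cong simp: dl_coassoc_nested)
qed

lemma dl_counit: "teq (cmod sC) (cmod sA) (concat (map (\<lambda>(c, x). map (\<lambda>(v, y). (sC (\<epsilon>C c) v, y)) x) (dl \<Delta>C m))) m"
proof -
  have "concat (map (\<lambda>(c, x). map (\<lambda>(v, y). (sC (\<epsilon>C c) v, y)) x) (dl \<Delta>C m)) =
      concat (map (\<lambda>(p, q). map (\<lambda>(p1, p2). (sC (\<epsilon>C p1) p2, q)) (\<Delta>C p)) m)"
    by (induction m) (auto simp: dl_def map_map_prod concat_map_singleton_prod simp del: map_map)
  moreover have "teq (cmod sC) (cmod sA) (concat (map (\<lambda>(p, q). map (\<lambda>(p1, p2). (sC (\<epsilon>C p1) p2, q)) (\<Delta>C p)) m))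
      (concat (map (\<lambda>(p, q). [(p, q)]) m))"
    by (rule teq_concat_map_cong) (auto simp: teq_counit_left)
  ultimately show ?thesis
    by (simp add: concat_map_singleton_prod)
qed

lemma \<rho>A_coassoc_nested: "teq (cmod sC) tensor_CA
    (concat (map (\<lambda>(h, x). map (\<lambda>(h1, h2). (actC p h1, [(actC q h2, x0 * x)])) (\<Delta>H h)) (\<rho>A a)))
    (map (\<lambda>(h, b). (actC p h, map (\<lambda>(h', y). (actC q h', x0 * y)) (\<rho>A b))) (\<rho>A a))"
proof -
  let ?F = "\<lambda>h L. [(actC p h, map (\<lambda>(h', y). (actC q h', x0 * y)) L)]"
  have "concat (map (\<lambda>(h, x). map (\<lambda>(h1, h2). (actC p h1, [(actC q h2, x0 * x)])) (\<Delta>H h)) (\<rho>A a))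
      = concat (map (\<lambda>(x, L). ?F x L) (dl \<Delta>H (\<rho>A a)))"
    by (simp only: concat_map_dl) (simp add: concat_map_singleton_prod)
  also have "teq (cmod sC) tensor_CA \<dots> (concat (map (\<lambda>(x, L). ?F x L) (dr \<rho>A (\<rho>A a))))"
  proof (rule teq_concat_map_balanced[OF \<rho>A_coassoc])
    fix v and w w' :: "('h \<times> 'a) list"
    assume "m_eq (tensor (cmod sH) (cmod sA)) w w'"
    then have "teq (cmod sC) (cmod sA) (map (\<lambda>(h', y). (actC q h', x0 * y)) w)
        (map (\<lambda>(h', y). (actC q h', x0 * y)) w')"
      using teq_map_act_mult by simp
    then show "teq (cmod sC) tensor_CA (?F v w) (?F v w')"
      using teq_eqr[of tensor_CA] by simp
  next
    fix r v and w :: "('h \<times> 'a) list"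
    show "teq (cmod sC) tensor_CA (?F (m_smul (cmod sH) r v) w) (?F v (m_smul (tensor (cmod sH) (cmod sA)) r w))"
      using teq_cmod_bal[of sC tensor_CA r "actC p v" "map (\<lambda>(h', y). (actC q h', x0 * y)) w"]
      by (simp add: map_map_prod actC_smul_right del: map_map)
  qed (simp_all add: teq_refl actC_add_right teq_cmod_addl teq_tensor_addr actC_zero_right teq_cmod_zerol
      teq_tensor_zeror)
  also have "concat (map (\<lambda>(x, L). ?F x L) (dr \<rho>A (\<rho>A a))) =
      map (\<lambda>(h, b). (actC p h, map (\<lambda>(h', y). (actC q h', x0 * y)) (\<rho>A b))) (\<rho>A a)"
    by (simp only: concat_map_dr) (simp add: concat_map_singleton_prod)
  finally show ?thesis .
qed

lemma dl_tensor_act_nested: "teq (cmod sC) tensor_CA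
   (concat (map (\<lambda>(h, x). map (\<lambda>(p1, p2). (p1, [(p2, x0 * x)])) (\<Delta>C (actC c h))) (\<rho>A a)))
   (concat (map (\<lambda>(p, q). map (\<lambda>(h, b). (actC p h, map (\<lambda>(h', y). (actC q h', x0 * y)) (\<rho>A b))) (\<rho>A a)) (\<Delta>C c)))"
proof -
  have "teq (cmod sC) tensor_CA
      (concat (map (\<lambda>(h, x). map (\<lambda>(p1, p2). (p1, [(p2, x0 * x)])) (\<Delta>C (actC c h))) (\<rho>A a)))
      (concat (map (\<lambda>(h, x). concat (map (\<lambda>(p, q). map (\<lambda>(h1, h2). (actC p h1, [(actC q h2, x0 * x)])) (\<Delta>H h))
        (\<Delta>C c))) (\<rho>A a)))"
  proof (rule teq_concat_map_cong_prod)
    fix h x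
    have "map (\<lambda>(c1, c2). (c1, [(c2, x0 * x)])) (concat (map (\<lambda>(p, q). map (\<lambda>(h1, h2). (actC p h1, actC q h2)) (\<Delta>H h)) D))
      = concat (map (\<lambda>(p, q). map (\<lambda>(h1, h2). (actC p h1, [(actC q h2, x0 * x)])) (\<Delta>H h)) D)" for D
      by (induction D) (auto simp: map_map_prod simp del: map_map)
    then show "teq (cmod sC) tensor_CA (map (\<lambda>(p1, p2). (p1, [(p2, x0 * x)])) (\<Delta>C (actC c h)))
        (concat (map (\<lambda>(p, q). map (\<lambda>(h1, h2). (actC p h1, [(actC q h2, x0 * x)])) (\<Delta>H h)) (\<Delta>C c)))"
      using teq_map_nested[OF \<Delta>C_act[of c h], of "x0 * x"] by simp
  qed
  also have "teq (cmod sC) tensor_CA \<dots>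
     (concat (map (\<lambda>(p, q). concat (map (\<lambda>(h, x). map (\<lambda>(h1, h2). (actC p h1, [(actC q h2, x0 * x)])) (\<Delta>H h))
       (\<rho>A a))) (\<Delta>C c)))"
    by (rule teq_concat_map_swap)
  also have "teq (cmod sC) tensor_CA \<dots>
     (concat (map (\<lambda>(p, q). map (\<lambda>(h, b). (actC p h, map (\<lambda>(h', y). (actC q h', x0 * y)) (\<rho>A b))) (\<rho>A a)) (\<Delta>C c)))"
    by (rule teq_concat_map_cong_prod) (rule \<rho>A_coassoc_nested)
  finally show ?thesis .
qed

lemma dl_tensor_act: "teq (cmod sC) tensor_CA (dl \<Delta>C (tensor_act m a))
    (concat (map (\<lambda>(c, x). map (\<lambda>(h, b). (actC c h, tensor_act x b)) (\<rho>A a)) (dl \<Delta>C m)))"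
proof -
  have dl_act: "dl \<Delta>C (map (\<lambda>(h, x). (actC c h, x0 * x)) R) =
      concat (map (\<lambda>(h, x). map (\<lambda>(p1, p2). (p1, [(p2, x0 * x)])) (\<Delta>C (actC c h))) R)" for c x0 R
    by (induction R) (auto simp: dl_def)
  have "dl \<Delta>C (tensor_act m a) = concat (map (\<lambda>(c, x0). concat (map (\<lambda>(h, x).
      map (\<lambda>(p1, p2). (p1, [(p2, x0 * x)])) (\<Delta>C (actC c h))) (\<rho>A a))) m)"
    by (simp only: tensor_act_def dl_concat_map dl_act)
  moreover have "concat (map (\<lambda>(c, x). map (\<lambda>(h, b). (actC c h, tensor_act x b)) (\<rho>A a)) (dl \<Delta>C m)) =
     concat (map (\<lambda>(c, x0). concat (map (\<lambda>(p, q). map (\<lambda>(h, b). (actC p h,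
       map (\<lambda>(h', y). (actC q h', x0 * y)) (\<rho>A b))) (\<rho>A a)) (\<Delta>C c))) m)"
    by (simp only: dl_def concat_map_concat_map) (simp add: map_map_prod tensor_act_singleton del: map_map)
  ultimately show ?thesis
    by (auto intro: teq_concat_map_cong simp: dl_tensor_act_nested)
qed

lemma doi_hopf_module_tensor: "doi_hopf_module sH sA \<rho>A sC \<Delta>C \<epsilon>C actC tensor_CA tensor_act (dl \<Delta>C)"
  unfolding doi_hopf_module_def
  by (simp add: setoid_kmod_tensor_cmod[OF module_sC] tensor_act_cong tensor_act_append tensor_act_add_right
      tensor_act_smul_left tensor_act_smul_right tensor_act_one tensor_act_mult dl_cong dl_append dl_smul
      dl_coassoc msum_tensor dl_counit dl_tensor_act teq_refl)

lemma normalizes_tensor_imp_total: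
  assumes "integral_normalizes tensor_CA tensor_act (dl \<Delta>C) \<gamma>"
  shows "total_integral sA \<Delta>C \<epsilon>C \<gamma>"
proof (rule total_if_gamma_twist_unit)
  fix c
  have "msum tensor_CA (concat (map (\<lambda>(c', y). map (\<lambda>(d, x). tensor_act x (\<gamma> c' d)) (dl \<Delta>C y)) (dl \<Delta>C [(c, 1)])))
     = concat (map (\<lambda>(p, q). gamma_twist 1 p (\<Delta>C q)) (\<Delta>C c))"
    by (simp add: msum_tensor dl_def map_map_prod tensor_act_singleton gamma_twist_def concat_concat_map
        del: map_map)
  then show "teq (cmod sC) (cmod sA) (concat (map (\<lambda>(p, q). gamma_twist 1 p (\<Delta>C q)) (\<Delta>C c))) [(c, 1)]"
    using assms unfolding integral_normalizes_def by (metis tensor_simps(1))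
qed

end

theorem proposition2p1p11:
  fixes sH :: "'k::comm_ring_1 \<Rightarrow> 'h::ring_1 \<Rightarrow> 'h"
    and \<Delta>H :: "'h \<Rightarrow> ('h \<times> 'h) list" and \<epsilon>H :: "'h \<Rightarrow> 'k"
    and sA :: "'k \<Rightarrow> 'a::ring_1 \<Rightarrow> 'a" and \<rho>A :: "'a \<Rightarrow> ('h \<times> 'a) list"
    and sC :: "'k \<Rightarrow> 'c::ab_group_add \<Rightarrow> 'c" and \<Delta>C :: "'c \<Rightarrow> ('c \<times> 'c) list"
    and \<epsilon>C :: "'c \<Rightarrow> 'k" and actC :: "'c \<Rightarrow> 'h \<Rightarrow> 'c"
    and \<gamma> :: "'c \<Rightarrow> 'c \<Rightarrow> 'a"
  assumes datum: "doi_hopf_datum sH \<Delta>H \<epsilon>H sA \<rho>A sC \<Delta>C \<epsilon>C actC"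
    and integral: "A_integral sH \<Delta>H sA \<rho>A sC \<Delta>C actC \<gamma>"
  shows
    "(total_integral sA \<Delta>C \<epsilon>C \<gamma> \<longleftrightarrow>
       (\<forall>c a. teq (cmod sC) (cmod sA)
          (concat (map (\<lambda>(c12, c3). concat (map (\<lambda>(c1, c2).
              map (\<lambda>(h, x). (actC c3 h, a * x)) (\<rho>A (\<gamma> c1 c2))) (\<Delta>C c12))) (\<Delta>C c)))
          [(c, a)]))
     \<and>
     (total_integral sA \<Delta>C \<epsilon>C \<gamma> \<longleftrightarrow>
       (\<forall>(M :: (('c \<times> 'a) list, 'k) kmod) actM \<rho>M.
          doi_hopf_module sH sA \<rho>A sC \<Delta>C \<epsilon>C actC M actM \<rho>M \<longrightarrow>
          integral_normalizes M actM \<rho>M \<gamma>))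
     \<and>
     (total_integral sA \<Delta>C \<epsilon>C \<gamma> \<longrightarrow>
       (\<forall>(M :: ('m, 'k) kmod) actM \<rho>M.
          doi_hopf_module sH sA \<rho>A sC \<Delta>C \<epsilon>C actC M actM \<rho>M \<longrightarrow>
          integral_normalizes M actM \<rho>M \<gamma>))"
proof -
  interpret doi_hopf_integral sH \<Delta>H \<epsilon>H sA \<rho>A sC \<Delta>C \<epsilon>C actC \<gamma>
    using datum integral by unfold_locales
  show ?thesis
    by (intro conjI total_iff_twisted_integral[unfolded twisted_integral_def])
      (use total_imp_integral_normalizes doi_hopf_module_tensor normalizes_tensor_imp_total in blast)+
qed

end
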